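(* Let $r\ge1$ and for each $i\in[r]$ let $\ell_i\ge1$ and sequences $\alpha_{i1},\dots,\alpha_{i\ell_i}\in[N]$ and $\beta_{i1},\dots,\beta_{i\ell_i}\in[N]$ be given. Let $\pi$ be a uniformly random permutation of $[N]$ and $Y_i:=\prod_{j=1}^{\ell_i}\mathbf 1\{\pi(\alpha_{ij})=\beta_{ij}\}$. Let $A_i:=\{\alpha_{ij}:j\in[\ell_i]\}$, $B_i:=\{\beta_{ij}:j\in[\ell_i]\}$, and let $\Gamma$ be the graph on $[r]$ with an edge $ik$ whenever $A_i\cap A_k\ne\emptyset$ or $B_i\cap B_k\ne\emptyset$; let $b$ be the number of connected components of $\Gamma$, and $\mu_e:=\big|\bigcup_{i\in[r]}\{(\alpha_{ij},\beta_{ij}):j\in[\ell_i]\}\big|$. Then $$|\kappa(Y_1,\dots,Y_r)|\le C N^{-(b-1)-\mu_e},$$ where $C$ is a constant depending on $r$ and $\ell_1,\dots,\ell_r$ but not on $N$ (nor on the $\alpha_{ij},\beta_{ij}$).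
   Context: $[N]:=\{1,\dots,N\}$. $\kappa(X_1,\dots,X_r)$ denotes the mixed (joint) cumulant of random variables $X_1,\dots,X_r$. *)

theory Defs
  imports "HOL-Probability.Probability" "HOL-Combinatorics.Permutations"
begin

definition joint_cumulant :: "'a measure \<Rightarrow> 'i set \<Rightarrow> ('i \<Rightarrow> 'a \<Rightarrow> real) \<Rightarrow> real" where
  "joint_cumulant M I X =
     (\<Sum>P\<in>{P. partition_on I P}.
        (-1) ^ (card P - 1) * fact (card P - 1) *
        (\<Prod>Bl\<in>P. integral\<^sup>L M (\<lambda>\<omega>. \<Prod>i\<in>Bl. X i \<omega>)))"

definition unif_perm :: "nat \<Rightarrow> (nat \<Rightarrow> nat) measure" where
  "unif_perm N = measure_pmf (pmf_of_set {\<sigma>. \<sigma> permutes {1..N}})"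

definition match_indicator ::
  "(nat \<Rightarrow> nat) \<Rightarrow> (nat \<Rightarrow> nat \<Rightarrow> nat) \<Rightarrow> (nat \<Rightarrow> nat \<Rightarrow> nat) \<Rightarrow> nat \<Rightarrow> (nat \<Rightarrow> nat) \<Rightarrow> real" where
  "match_indicator l \<alpha> \<beta> i \<pi> = (\<Prod>j\<in>{1..l i}. if \<pi> (\<alpha> i j) = \<beta> i j then 1 else 0)"

definition dep_edges ::
  "nat \<Rightarrow> (nat \<Rightarrow> nat) \<Rightarrow> (nat \<Rightarrow> nat \<Rightarrow> nat) \<Rightarrow> (nat \<Rightarrow> nat \<Rightarrow> nat) \<Rightarrow> (nat \<times> nat) set" where
  "dep_edges r l \<alpha> \<beta> = {(i, k). i \<in> {1..r} \<and> k \<in> {1..r} \<and>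
      ((\<alpha> i ` {1..l i}) \<inter> (\<alpha> k ` {1..l k}) \<noteq> {} \<or>
       (\<beta> i ` {1..l i}) \<inter> (\<beta> k ` {1..l k}) \<noteq> {})}"

definition num_components ::
  "nat \<Rightarrow> (nat \<Rightarrow> nat) \<Rightarrow> (nat \<Rightarrow> nat \<Rightarrow> nat) \<Rightarrow> (nat \<Rightarrow> nat \<Rightarrow> nat) \<Rightarrow> nat" where
  "num_components r l \<alpha> \<beta> = card ({1..r} // ((dep_edges r l \<alpha> \<beta>) \<union> Id_on {1..r})\<^sup>*)"

definition mu_e ::
  "nat \<Rightarrow> (nat \<Rightarrow> nat) \<Rightarrow> (nat \<Rightarrow> nat \<Rightarrow> nat) \<Rightarrow> (nat \<Rightarrow> nat \<Rightarrow> nat) \<Rightarrow> nat" where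
  "mu_e r l \<alpha> \<beta> = card (\<Union>i\<in>{1..r}. (\<lambda>j. (\<alpha> i j, \<beta> i j)) ` {1..l i})"

end

theory Submission
  imports Defs "HOL-Computational_Algebra.Polynomial"
begin

text \<open>
  For \<open>V \<subseteq> [r]\<close> the moment \<open>E (\<Prod>i\<in>V. Y i)\<close> equals \<open>1 / (N)_k\<close>, with \<open>(N)_k\<close> the falling
  factorial and \<open>k\<close> the number of distinct pairs \<open>(\<alpha> i j, \<beta> i j)\<close> with \<open>i \<in> V\<close> (it is \<open>0\<close> if
  these pairs do not form a partial bijection). Pairs from different components of \<open>\<Gamma>\<close> share
  no values, so the moment is the product of the moments of the parts of \<open>V\<close> in the components,
  times the correction \<open>(\<Prod>c. (N)_(k c)) / (N)_k\<close>.
  Moebius inversion writes the logarithm of the correction as \<open>\<Sum>T\<subseteq>V. \<phi> T\<close>, and a cluster \<open>T\<close>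
  meeting \<open>t\<close> components has \<open>\<phi> T = O(N^(1 - t))\<close>: in \<open>ln (N)_k = k ln N + (\<Sum>j<k. ln (1 - j/N))\<close>
  the Taylor terms of order below \<open>t - 1\<close> are polynomials of degree below \<open>t\<close> in \<open>k\<close>, which is
  additive over components, and the Moebius transform over \<open>T\<close> annihilates them.

  The cumulant is the linear coefficient of the polynomial in \<open>z\<close> whose value is the sum, over
  all \<open>z\<close>-colourings of \<open>[r]\<close>, of the products of the moments of the colour classes. Writing
  \<open>exp (\<phi> T) = 1 + y T\<close> and expanding the product of the \<open>1 + y T\<close> turns it into a sum over
  families \<open>F\<close> of clusters. If \<open>F\<close> does not
  connect the \<open>b\<close> components, the colouring sum factors over a union of components and the
  linear coefficient vanishes; otherwise \<open>\<Prod>T\<in>F. y T = O(N^(1 - b))\<close>, while every product of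
  moments over a partition of \<open>[r]\<close> is \<open>O(N^(-\<mu>\<^sub>e))\<close>.
\<close>

section \<open>Partitions and colourings\<close>

definition block_of :: "'i set set \<Rightarrow> 'i \<Rightarrow> 'i set" where
  "block_of P i = (THE s. s \<in> P \<and> i \<in> s)"

lemma block_of_eq:
  assumes "partition_on I P" "s \<in> P" "i \<in> s"
  shows "block_of P i = s"
  unfolding block_of_def
proof (rule the_equality)
  show "s \<in> P \<and> i \<in> s" using assms by auto
  fix s' assume "s' \<in> P \<and> i \<in> s'"
  then show "s' = s" using assms partition_onD2[OF assms(1)] unfolding disjoint_def by blast
qed

lemma block_of_in:
  assumes "partition_on I P" "i \<in> I"
  shows "block_of P i \<in> P" "i \<in> block_of P i"
proof -
  obtain s where "s \<in> P" "i \<in> s" using assms partition_onD1[OF assms(1)] by auto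
  then show "block_of P i \<in> P" "i \<in> block_of P i" using block_of_eq[OF assms(1)] by auto
qed

lemma image_block_of:
  assumes "partition_on I P"
  shows "block_of P ` I = P"
proof
  show "block_of P ` I \<subseteq> P" using block_of_in(1)[OF assms] by blast
  show "P \<subseteq> block_of P ` I"
  proof
    fix s assume s: "s \<in> P"
    then obtain i where "i \<in> s" using partition_onD3[OF assms] by (metis ex_in_conv)
    then show "s \<in> block_of P ` I"
      using block_of_eq[OF assms s] partition_onD1[OF assms] s by blast
  qed
qed

lemma card_partition_on_ge_1:
  assumes "finite I" "I \<noteq> {}" "partition_on I P"
  shows "card P \<ge> 1"
  using finite_elements[OF assms(1,3)] partition_onD1[OF assms(3)] assms(2)
  by (auto simp: Suc_le_eq card_gt_0_iff)

lemma card_partition_on_le: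
  assumes "finite I" "partition_on I P"
  shows "card P \<le> card I"
  using card_image_le[OF assms(1), of "block_of P"] image_block_of[OF assms(2)] by simp

definition colour_class :: "('i \<Rightarrow> nat) \<Rightarrow> 'i set \<Rightarrow> nat \<Rightarrow> 'i set" where
  "colour_class f I v = {i\<in>I. f i = v}"

definition colour_partition :: "('i \<Rightarrow> nat) \<Rightarrow> 'i set \<Rightarrow> 'i set set" where
  "colour_partition f I = colour_class f I ` f ` I"

definition colouring_sum :: "('i set \<Rightarrow> real) \<Rightarrow> 'i set \<Rightarrow> nat \<Rightarrow> real" where
  "colouring_sum g I z = (\<Sum>f\<in>I \<rightarrow>\<^sub>E {..<z}. \<Prod>v<z. g (colour_class f I v))"

lemma partition_on_colour_partition: "partition_on I (colour_partition f I)"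
  unfolding partition_on_def colour_partition_def colour_class_def disjoint_def by auto

lemma colour_partition_restrict: "colour_partition (restrict f I) I = colour_partition f I"
  unfolding colour_partition_def colour_class_def by auto

lemma colour_partition_block_colouring:
  assumes P: "partition_on I P" and h: "inj_on h P"
  shows "colour_partition (\<lambda>i. h (block_of P i)) I = P"
proof -
  have colour_class_eq: "colour_class (\<lambda>i. h (block_of P i)) I (h (block_of P i)) = block_of P i"
    if i: "i \<in> I" for i
  proof (unfold colour_class_def, intro equalityI subsetI)
    fix j assume "j \<in> {j \<in> I. h (block_of P j) = h (block_of P i)}"
    then have j: "j \<in> I" and eq: "h (block_of P j) = h (block_of P i)" by auto
    have "block_of P j = block_of P i"
      using inj_onD[OF h eq block_of_in(1)[OF P j] block_of_in(1)[OF P i]] .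
    then show "j \<in> block_of P i" using block_of_in(2)[OF P j] by simp
  next
    fix j assume j: "j \<in> block_of P i"
    have Pi: "block_of P i \<in> P" using block_of_in(1)[OF P i] .
    then have "j \<in> I" using j partition_onD1[OF P] by blast
    moreover have "block_of P j = block_of P i" using block_of_eq[OF P Pi j] .
    ultimately show "j \<in> {j \<in> I. h (block_of P j) = h (block_of P i)}" by simp
  qed
  have "colour_partition (\<lambda>i. h (block_of P i)) I = block_of P ` I"
    unfolding colour_partition_def image_image by (rule image_cong[OF refl colour_class_eq])
  then show ?thesis using image_block_of[OF P] by simp
qed

lemma colour_partition_const_on_block:
  assumes "colour_partition f I = P" "s \<in> P" "i \<in> s" "j \<in> s"
  shows "f i = f j"
proof -
  obtain k where "s = colour_class f I (f k)" using assms(1,2) unfolding colour_partition_def by auto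
  then show ?thesis using assms(3,4) unfolding colour_class_def by simp
qed

lemma colour_partition_inj_on_blocks:
  assumes "colour_partition f I = P" "s \<in> P" "s' \<in> P" "i \<in> s" "i' \<in> s'" "f i = f i'"
  shows "s = s'"
proof -
  obtain k k' where "s = colour_class f I (f k)" "s' = colour_class f I (f k')"
    using assms(1-3) unfolding colour_partition_def by auto
  then show ?thesis using assms(4-6) unfolding colour_class_def by auto
qed

lemma colouring_factors_through_blocks:
  assumes P: "partition_on I P" and f: "f \<in> I \<rightarrow>\<^sub>E {..<z}" "colour_partition f I = P"
  obtains h where "h \<in> P \<rightarrow>\<^sub>E {..<z}" "inj_on h P" "f = (\<lambda>i\<in>I. h (block_of P i))"
proof -
  have some_in: "(SOME i. i \<in> s) \<in> s" if "s \<in> P" for s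
    using partition_onD3[OF P] that by (auto simp: some_in_eq)
  define h where "h = (\<lambda>s\<in>P. f (SOME i. i \<in> s))"
  have h_lt: "h s < z" if "s \<in> P" for s
    using f some_in[OF that] partition_onD1[OF P] that unfolding h_def by auto
  have "h \<in> P \<rightarrow>\<^sub>E {..<z}" using h_lt unfolding h_def by auto
  moreover have "inj_on h P"
  proof (rule inj_onI)
    fix s s' assume s: "s \<in> P" "s' \<in> P" "h s = h s'"
    then have "f (SOME i. i \<in> s) = f (SOME i. i \<in> s')" unfolding h_def by simp
    then show "s = s'"
      by (rule colour_partition_inj_on_blocks[OF f(2) s(1,2) some_in[OF s(1)] some_in[OF s(2)]])
  qed
  moreover have "f = (\<lambda>i\<in>I. h (block_of P i))"
  proof (rule PiE_ext)
    show "(\<lambda>i\<in>I. h (block_of P i)) \<in> I \<rightarrow>\<^sub>E {..<z}"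
      using h_lt block_of_in(1)[OF P] by auto
    fix i assume i: "i \<in> I"
    have b: "block_of P i \<in> P" "i \<in> block_of P i" using block_of_in[OF P i] by auto
    have "f (SOME j. j \<in> block_of P i) = f i"
      by (rule colour_partition_const_on_block[OF f(2) b(1) some_in[OF b(1)] b(2)])
    then show "f i = (\<lambda>i\<in>I. h (block_of P i)) i" using i b(1) unfolding h_def by simp
  qed (use f in auto)
  ultimately show ?thesis using that by blast
qed

lemma inj_on_block_colouring:
  assumes P: "partition_on I P"
  shows "inj_on (\<lambda>h. \<lambda>i\<in>I. h (block_of P i)) (P \<rightarrow>\<^sub>E A)"
proof (rule inj_onI)
  fix h h' assume h: "h \<in> P \<rightarrow>\<^sub>E A" "h' \<in> P \<rightarrow>\<^sub>E A"
    and eq: "(\<lambda>i\<in>I. h (block_of P i)) = (\<lambda>i\<in>I. h' (block_of P i))"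
  show "h = h'"
  proof (rule PiE_ext[OF h])
    fix s assume s: "s \<in> P"
    then obtain i where "i \<in> s" using partition_onD3[OF P] by (metis ex_in_conv)
    then have "i \<in> I" "block_of P i = s" using s partition_onD1[OF P] block_of_eq[OF P s] by auto
    then show "h s = h' s" using fun_cong[OF eq, of i] by simp
  qed
qed

lemma card_colourings_with_partition:
  assumes I: "finite I" and P: "partition_on I P"
  shows "card {f \<in> I \<rightarrow>\<^sub>E {..<z}. colour_partition f I = P} = (\<Prod>j<card P. z - j)"
proof -
  let ?lift = "\<lambda>h. \<lambda>i\<in>I. h (block_of P i)" and ?B = "{h \<in> P \<rightarrow>\<^sub>E {..<z}. inj_on h P}"
  have "{f \<in> I \<rightarrow>\<^sub>E {..<z}. colour_partition f I = P} = ?lift ` ?B"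
  proof (intro equalityI subsetI)
    fix f assume "f \<in> {f \<in> I \<rightarrow>\<^sub>E {..<z}. colour_partition f I = P}"
    then show "f \<in> ?lift ` ?B" using colouring_factors_through_blocks[OF P] by blast
  next
    fix f assume "f \<in> ?lift ` ?B"
    then obtain h where h: "h \<in> ?B" "f = ?lift h" by blast
    then have "f \<in> I \<rightarrow>\<^sub>E {..<z}" using block_of_in[OF P] by auto
    moreover have "colour_partition f I = P"
      unfolding h(2) colour_partition_restrict
      using colour_partition_block_colouring[OF P] h(1) by simp
    ultimately show "f \<in> {f \<in> I \<rightarrow>\<^sub>E {..<z}. colour_partition f I = P}" by blast
  qed
  moreover have "inj_on ?lift ?B" using inj_on_block_colouring[OF P] by (rule inj_on_subset) blast
  ultimately have "card {f \<in> I \<rightarrow>\<^sub>E {..<z}. colour_partition f I = P} = card ?B"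
    by (simp add: card_image)
  also have "\<dots> = (\<Prod>j<card P. z - j)"
    using card_inj_on_subset_funcset[of P "{..<z}" P] finite_elements[OF I P]
    by (simp add: atLeast0LessThan)
  finally show ?thesis .
qed

lemma prod_colour_classes:
  assumes "f \<in> I \<rightarrow>\<^sub>E {..<z}" "g {} = 1"
  shows "(\<Prod>v<z. g (colour_class f I v)) = (\<Prod>s\<in>colour_partition f I. g s)"
proof -
  have "(\<Prod>v<z. g (colour_class f I v)) = (\<Prod>v\<in>f ` I. g (colour_class f I v))"
  proof (rule prod.mono_neutral_right)
    have "colour_class f I v = {}" if "v \<notin> f ` I" for v
      using that unfolding colour_class_def by auto
    then show "\<forall>v\<in>{..<z} - f ` I. g (colour_class f I v) = 1" using assms(2) by simp
  qed (use assms(1) in auto)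
  also have "\<dots> = (\<Prod>s\<in>colour_partition f I. g s)"
    unfolding colour_partition_def
    by (rule prod.reindex[symmetric, unfolded comp_def]) (auto simp: inj_on_def colour_class_def)
  finally show ?thesis .
qed

lemma sum_PiE_restrict_mult:
  fixes F G :: "('a \<Rightarrow> 'b) \<Rightarrow> real"
  assumes "J \<subseteq> I"
  shows "(\<Sum>f\<in>I \<rightarrow>\<^sub>E B. F (restrict f J) * G (restrict f (I - J))) =
         (\<Sum>f\<in>J \<rightarrow>\<^sub>E B. F f) * (\<Sum>f\<in>(I - J) \<rightarrow>\<^sub>E B. G f)"
proof -
  define halves where "halves f = (restrict f J, restrict f (I - J))" for f :: "'a \<Rightarrow> 'b"
  define glue where "glue p = (\<lambda>i. if i \<in> J then fst p i else snd p i)"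
    for p :: "('a \<Rightarrow> 'b) \<times> ('a \<Rightarrow> 'b)"
  have "bij_betw halves (I \<rightarrow>\<^sub>E B) ((J \<rightarrow>\<^sub>E B) \<times> ((I - J) \<rightarrow>\<^sub>E B))"
    by (rule bij_betw_byWitness[where f'=glue])
      (use assms in \<open>auto simp: halves_def glue_def PiE_def extensional_def fun_eq_iff\<close>)
  then have "(\<Sum>f\<in>I \<rightarrow>\<^sub>E B. F (restrict f J) * G (restrict f (I - J))) =
        (\<Sum>p\<in>(J \<rightarrow>\<^sub>E B) \<times> ((I - J) \<rightarrow>\<^sub>E B). F (fst p) * G (snd p))"
    using sum.reindex_bij_betw[of halves _ _ "\<lambda>p. F (fst p) * G (snd p)"] by (simp add: halves_def)
  also have "\<dots> = (\<Sum>f\<in>J \<rightarrow>\<^sub>E B. F f) * (\<Sum>f\<in>(I - J) \<rightarrow>\<^sub>E B. G f)"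
    by (simp add: sum_product sum.cartesian_product split_beta)
  finally show ?thesis .
qed

lemma colouring_sum_mult:
  assumes "J \<subseteq> I" and g: "\<And>s. s \<subseteq> I \<Longrightarrow> g s = g (s \<inter> J) * g (s - J)"
  shows "colouring_sum g I z = colouring_sum g J z * colouring_sum g (I - J) z"
proof -
  have "g (colour_class f I v) =
        g (colour_class (restrict f J) J v) * g (colour_class (restrict f (I - J)) (I - J) v)" for f v
  proof -
    have "colour_class f I v \<inter> J = colour_class (restrict f J) J v"
      "colour_class f I v - J = colour_class (restrict f (I - J)) (I - J) v"
      using assms(1) unfolding colour_class_def by auto
    then show ?thesis using g[of "colour_class f I v"] unfolding colour_class_def by auto
  qed
  then have "colouring_sum g I z = (\<Sum>f\<in>I \<rightarrow>\<^sub>E {..<z}.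
      (\<Prod>v<z. g (colour_class (restrict f J) J v)) *
      (\<Prod>v<z. g (colour_class (restrict f (I - J)) (I - J) v)))"
    unfolding colouring_sum_def by (simp add: prod.distrib)
  also have "\<dots> = colouring_sum g J z * colouring_sum g (I - J) z"
    unfolding colouring_sum_def by (rule sum_PiE_restrict_mult[OF assms(1)])
  finally show ?thesis .
qed

section \<open>The cumulant polynomial\<close>

definition falling_fact :: "real \<Rightarrow> nat \<Rightarrow> real" where
  "falling_fact x k = (\<Prod>j<k. x - real j)"

definition falling_poly :: "nat \<Rightarrow> real poly" where
  "falling_poly k = (\<Prod>j<k. [:- real j, 1:])"

text \<open>At a natural number \<open>z\<close> the cumulant polynomial of a set function \<open>g\<close> counts
  \<open>z\<close>-colourings weighted by \<open>g\<close>, while its linear coefficient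
  is the moment--cumulant formula.\<close>
definition cumulant_poly :: "('i set \<Rightarrow> real) \<Rightarrow> 'i set \<Rightarrow> real poly" where
  "cumulant_poly g I = (\<Sum>P\<in>{P. partition_on I P}. smult (\<Prod>s\<in>P. g s) (falling_poly (card P)))"

lemma of_nat_prod_diff: "real (\<Prod>j<k. z - j) = falling_fact (real z) k"
proof (cases "k \<le> z")
  case True
  then show ?thesis unfolding falling_fact_def by (auto simp: of_nat_diff intro!: prod.cong)
next
  case False
  then have "z \<in> {..<k}" by auto
  then have "(\<Prod>j<k. z - j) = 0" "falling_fact (real z) k = 0"
    unfolding falling_fact_def by (auto intro!: prod_zero bexI[of _ z])
  then show ?thesis by simp
qed

lemma poly_falling_poly: "poly (falling_poly k) x = falling_fact x k"
  unfolding falling_poly_def falling_fact_def by (simp add: poly_prod)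

lemma coeff_falling_poly_1: "coeff (falling_poly (Suc n)) 1 = (-1) ^ n * fact n"
proof (induction n)
  case 0
  then show ?case by (simp add: falling_poly_def)
next
  case (Suc n)
  have "coeff (falling_poly (Suc n)) 0 = 0"
    by (auto simp: poly_0_coeff_0[symmetric] poly_falling_poly falling_fact_def)
  moreover have "falling_poly (Suc (Suc n)) = falling_poly (Suc n) * [:- real (Suc n), 1:]"
    unfolding falling_poly_def by simp
  ultimately show ?case by (simp add: coeff_mult Suc.IH[unfolded One_nat_def] algebra_simps)
qed

lemma poly_eq_if_eq_on_nat:
  fixes p q :: "real poly"
  assumes "\<And>z::nat. poly p (real z) = poly q (real z)"
  shows "p = q"
proof (rule ccontr)
  assume "p \<noteq> q"
  then have "finite {x. poly (p - q) x = 0}" by (intro poly_roots_finite) simp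
  moreover have "range real \<subseteq> {x. poly (p - q) x = 0}" using assms by auto
  ultimately have "finite (range real)" using finite_subset by blast
  then show False using range_inj_infinite[of real] inj_of_nat by simp
qed

lemma poly_cumulant_poly:
  assumes I: "finite I" and g: "g {} = 1"
  shows "poly (cumulant_poly g I) (real z) = colouring_sum g I z"
proof -
  let ?F = "I \<rightarrow>\<^sub>E {..<z}"
  let ?Parts = "{P. partition_on I P}"
  have "colouring_sum g I z = (\<Sum>f\<in>?F. \<Prod>s\<in>colour_partition f I. g s)"
    unfolding colouring_sum_def using prod_colour_classes g by (intro sum.cong) auto
  also have "\<dots> = (\<Sum>P\<in>?Parts. \<Sum>f\<in>{f\<in>?F. colour_partition f I = P}. \<Prod>s\<in>colour_partition f I. g s)"
    by (rule sum.group[symmetric])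
      (use I finitely_many_partition_on[OF I] partition_on_colour_partition in \<open>auto simp: finite_PiE\<close>)
  also have "\<dots> = (\<Sum>P\<in>?Parts. real (card {f\<in>?F. colour_partition f I = P}) * (\<Prod>s\<in>P. g s))"
    by (intro sum.cong) auto
  also have "\<dots> = (\<Sum>P\<in>?Parts. (\<Prod>s\<in>P. g s) * falling_fact (real z) (card P))"
    using card_colourings_with_partition[OF I] of_nat_prod_diff
    by (intro sum.cong) (auto simp: mult.commute)
  also have "\<dots> = poly (cumulant_poly g I) (real z)"
    unfolding cumulant_poly_def by (simp add: poly_sum poly_falling_poly)
  finally show ?thesis by simp
qed

lemma coeff_cumulant_poly_1:
  assumes "finite I" "I \<noteq> {}"
  shows "coeff (cumulant_poly g I) 1 = (\<Sum>P\<in>{P. partition_on I P}.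
            (-1) ^ (card P - 1) * fact (card P - 1) * (\<Prod>s\<in>P. g s))"
  unfolding cumulant_poly_def coeff_sum
proof (rule sum.cong[OF refl])
  fix P assume "P \<in> {P. partition_on I P}"
  then have "card P \<ge> 1" using card_partition_on_ge_1[OF assms] by simp
  then obtain n where n: "card P = Suc n" by (cases "card P") auto
  show "coeff (smult (\<Prod>s\<in>P. g s) (falling_poly (card P))) 1 =
        (-1) ^ (card P - 1) * fact (card P - 1) * (\<Prod>s\<in>P. g s)"
    unfolding n using coeff_falling_poly_1[of n] by simp
qed

lemma abs_coeff_cumulant_poly_1_le:
  assumes "finite I" "I \<noteq> {}" "\<And>P. partition_on I P \<Longrightarrow> \<bar>\<Prod>s\<in>P. g s\<bar> \<le> B"
  shows "\<bar>coeff (cumulant_poly g I) 1\<bar> \<le> (\<Sum>P\<in>{P. partition_on I P}. fact (card P - 1)) * B"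
proof -
  have "\<bar>coeff (cumulant_poly g I) 1\<bar>
      \<le> (\<Sum>P\<in>{P. partition_on I P}. \<bar>(-1) ^ (card P - 1) * fact (card P - 1) * (\<Prod>s\<in>P. g s)\<bar>)"
    unfolding coeff_cumulant_poly_1[OF assms(1,2)] by (rule sum_abs)
  also have "\<dots> \<le> (\<Sum>P\<in>{P. partition_on I P}. fact (card P - 1) * B)"
    using assms(3) by (intro sum_mono) (simp add: abs_mult mult_left_mono)
  finally show ?thesis by (simp add: sum_distrib_right)
qed

text \<open>If \<open>g\<close> is multiplicative across a split of \<open>I\<close>, the cumulant polynomial factors into two
  polynomials that vanish at \<open>0\<close> (there are no \<open>0\<close>-colourings), so its linear coefficient vanishes.\<close>
lemma coeff_cumulant_poly_1_eq_0_if_split: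
  assumes I: "finite I" and J: "J \<subseteq> I" "J \<noteq> {}" "I - J \<noteq> {}" and g0: "g {} = 1"
    and g: "\<And>s. s \<subseteq> I \<Longrightarrow> g s = g (s \<inter> J) * g (s - J)"
  shows "coeff (cumulant_poly g I) 1 = 0"
proof -
  have finJ: "finite J" "finite (I - J)" using I J(1) finite_subset by auto
  have factor: "cumulant_poly g I = cumulant_poly g J * cumulant_poly g (I - J)"
    by (rule poly_eq_if_eq_on_nat)
      (simp add: poly_cumulant_poly I finJ g0 colouring_sum_mult[OF J(1) g])
  have coeff_0: "coeff (cumulant_poly g K) 0 = 0" if "finite K" "K \<noteq> {}" for K
  proof -
    have "K \<rightarrow>\<^sub>E {..<0::nat} = {}" using that(2) by (auto simp: PiE_eq_empty_iff)
    then show ?thesis using poly_cumulant_poly[of K g 0] that(1) g0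
      by (simp add: poly_0_coeff_0 colouring_sum_def)
  qed
  show ?thesis unfolding factor using coeff_0[OF finJ(1) J(2)] coeff_0[OF finJ(2) J(3)]
    by (simp add: coeff_mult atMost_Suc)
qed

section \<open>Moebius inversion on the Boolean lattice\<close>

definition mobius_diff :: "'a set \<Rightarrow> ('a set \<Rightarrow> real) \<Rightarrow> real" where
  "mobius_diff T h = (\<Sum>V\<in>Pow T. (-1) ^ card (T - V) * h V)"

lemma mobius_diff_insert:
  assumes "finite T" "x \<notin> T"
  shows "mobius_diff (insert x T) h = mobius_diff T (\<lambda>V. h (insert x V)) - mobius_diff T h"
proof -
  have inj: "inj_on (insert x) (Pow T)"
    using assms(2) unfolding inj_on_def by (metis Diff_insert_absorb PowD subsetD)
  have "mobius_diff (insert x T) h = (\<Sum>V\<in>Pow T. (-1) ^ card (insert x T - V) * h V) +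
        (\<Sum>V\<in>insert x ` Pow T. (-1) ^ card (insert x T - V) * h V)"
    unfolding mobius_diff_def Pow_insert using assms by (intro sum.union_disjoint) auto
  also have "(\<Sum>V\<in>insert x ` Pow T. (-1) ^ card (insert x T - V) * h V) =
             (\<Sum>V\<in>Pow T. (-1) ^ card (insert x T - insert x V) * h (insert x V))"
    by (rule sum.reindex[OF inj, unfolded comp_def])
  also have "\<dots> = mobius_diff T (\<lambda>V. h (insert x V))"
    unfolding mobius_diff_def using assms(2)
    by (intro sum.cong refl) (simp add: insert_Diff_if Diff_insert0 insert_absorb subset_iff)
  also have "(\<Sum>V\<in>Pow T. (-1) ^ card (insert x T - V) * h V) = - mobius_diff T h"
  proof -
    have "card (insert x T - V) = Suc (card (T - V))" if "V \<subseteq> T" for V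
    proof -
      have "insert x T - V = insert x (T - V)" using that assms(2) by auto
      then show ?thesis using assms by simp
    qed
    then show ?thesis unfolding mobius_diff_def sum_negf[symmetric] by (intro sum.cong) auto
  qed
  finally show ?thesis by simp
qed

lemma mobius_diff_eq_0_if_local:
  assumes "finite T" "\<And>V. V \<subseteq> T \<Longrightarrow> h V = h (V \<inter> W)" "\<not> T \<subseteq> W"
  shows "mobius_diff T h = 0"
proof -
  obtain x where x: "x \<in> T" "x \<notin> W" using assms(3) by auto
  have T: "T = insert x (T - {x})" using x(1) by auto
  have "mobius_diff (T - {x}) (\<lambda>V. h (insert x V)) = mobius_diff (T - {x}) h"
    unfolding mobius_diff_def
  proof (intro sum.cong refl)
    fix V assume "V \<in> Pow (T - {x})"
    then have "V \<subseteq> T" "insert x V \<subseteq> T" "insert x V \<inter> W = V \<inter> W" using x by auto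
    then show "(-1) ^ card (T - {x} - V) * h (insert x V) = (-1) ^ card (T - {x} - V) * h V"
      using assms(2) by metis
  qed
  then show ?thesis using mobius_diff_insert[of "T - {x}" x h] assms(1) T by simp
qed

lemma sum_mobius_diff:
  assumes "finite S"
  shows "(\<Sum>T\<in>Pow S. mobius_diff T h) = h S"
  using assms
proof (induction S arbitrary: h rule: finite_induct)
  case empty
  then show ?case by (simp add: mobius_diff_def)
next
  case (insert x S)
  have inj: "inj_on (insert x) (Pow S)"
    using insert(2) unfolding inj_on_def by (metis Diff_insert_absorb PowD subsetD)
  have "(\<Sum>T\<in>Pow (insert x S). mobius_diff T h)
      = (\<Sum>T\<in>Pow S. mobius_diff T h) + (\<Sum>T\<in>insert x ` Pow S. mobius_diff T h)"
    unfolding Pow_insert using insert by (intro sum.union_disjoint) auto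
  also have "(\<Sum>T\<in>insert x ` Pow S. mobius_diff T h) = (\<Sum>T\<in>Pow S. mobius_diff (insert x T) h)"
    by (rule sum.reindex[OF inj, unfolded comp_def])
  also have "\<dots> = (\<Sum>T\<in>Pow S. mobius_diff T (\<lambda>V. h (insert x V)) - mobius_diff T h)"
    using insert finite_subset by (intro sum.cong refl mobius_diff_insert) auto
  finally show ?case using insert.IH by (simp add: sum_subtractf)
qed

lemma mobius_diff_sum: "mobius_diff T (\<lambda>V. \<Sum>i\<in>A. h i V) = (\<Sum>i\<in>A. mobius_diff T (h i))"
  unfolding mobius_diff_def by (simp add: sum_distrib_left sum.swap[of _ A])

lemma mobius_diff_add: "mobius_diff T (\<lambda>V. h1 V + h2 V) = mobius_diff T h1 + mobius_diff T h2"
  unfolding mobius_diff_def by (simp add: algebra_simps sum.distrib)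

lemma mobius_diff_diff: "mobius_diff T (\<lambda>V. h1 V - h2 V) = mobius_diff T h1 - mobius_diff T h2"
  unfolding mobius_diff_def by (simp add: algebra_simps sum_subtractf)

lemma mobius_diff_cmult: "mobius_diff T (\<lambda>V. c * h V) = c * mobius_diff T h"
  unfolding mobius_diff_def by (simp add: algebra_simps sum_distrib_left)

lemma mobius_diff_cong: "(\<And>V. V \<subseteq> T \<Longrightarrow> h1 V = h2 V) \<Longrightarrow> mobius_diff T h1 = mobius_diff T h2"
  unfolding mobius_diff_def by (intro sum.cong refl) auto

lemma abs_mobius_diff_le: "\<bar>mobius_diff T h\<bar> \<le> (\<Sum>V\<in>Pow T. \<bar>h V\<bar>)"
  unfolding mobius_diff_def by (rule order.trans[OF sum_abs]) (simp add: abs_mult)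

definition power_sum :: "nat \<Rightarrow> nat \<Rightarrow> real" where
  "power_sum m k = (\<Sum>j<k. real j ^ m)"

lemma power_sum_binomial: "real k ^ Suc m = (\<Sum>i\<le>m. real (Suc m choose i) * power_sum i k)"
proof -
  have "real k ^ Suc m = (\<Sum>j<k. real (Suc j) ^ Suc m - real j ^ Suc m)"
    using sum_lessThan_telescope[of "\<lambda>j. real j ^ Suc m" k] by simp
  also have "\<dots> = (\<Sum>j<k. \<Sum>i\<le>m. real (Suc m choose i) * real j ^ i)"
  proof (rule sum.cong[OF refl])
    fix j
    have "real (Suc j) ^ Suc m = (\<Sum>i\<le>Suc m. real (Suc m choose i) * real j ^ i)"
      using binomial_ring[of "real j" 1 "Suc m"] by (simp add: add.commute)
    then show "real (Suc j) ^ Suc m - real j ^ Suc m = (\<Sum>i\<le>m. real (Suc m choose i) * real j ^ i)"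
      by (simp add: atMost_Suc)
  qed
  also have "\<dots> = (\<Sum>i\<le>m. real (Suc m choose i) * power_sum i k)"
    unfolding power_sum_def by (simp add: sum.swap[of _ "{..<k}"] sum_distrib_left)
  finally show ?thesis .
qed

text \<open>Power sums \<open>\<Sum>j<k. j^m\<close> are polynomials of degree \<open>m + 1\<close> in \<open>k\<close>.\<close>
lemma mobius_diff_power_sum_eq_0:
  assumes "\<And>d. d < t \<Longrightarrow> mobius_diff T (\<lambda>V. real (\<kappa> V) ^ d) = 0" and "m + 2 \<le> t"
  shows "mobius_diff T (\<lambda>V. power_sum m (\<kappa> V)) = 0"
  using assms(2)
proof (induction m rule: less_induct)
  case (less m)
  have "0 = mobius_diff T (\<lambda>V. real (\<kappa> V) ^ Suc m)" using assms(1)[of "Suc m"] less.prems by simp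
  also have "\<dots> = (\<Sum>i\<le>m. real (Suc m choose i) * mobius_diff T (\<lambda>V. power_sum i (\<kappa> V)))"
    by (simp only: power_sum_binomial mobius_diff_sum mobius_diff_cmult)
  also have "\<dots> = real (Suc m choose m) * mobius_diff T (\<lambda>V. power_sum m (\<kappa> V))"
    using less by (simp add: lessThan_Suc_atMost[symmetric])
  finally show ?case by simp
qed

section \<open>The cluster expansion of the cumulant polynomial\<close>

definition uncut :: "('a set \<Rightarrow> real) \<Rightarrow> 'a set set \<Rightarrow> 'a set \<Rightarrow> real" where
  "uncut g F s = g s * (if \<forall>T\<in>F. T \<subseteq> s \<or> T \<inter> s = {} then 1 else 0)"

definition monochromatic_sets :: "('i \<Rightarrow> nat) \<Rightarrow> 'i set \<Rightarrow> nat \<Rightarrow> 'i set set" where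
  "monochromatic_sets f I z = {T \<in> Pow I - {{}}. \<exists>v<z. T \<subseteq> colour_class f I v}"

lemma uncut_split:
  assumes "\<forall>T\<in>F. T \<subseteq> J \<or> T \<inter> J = {}" "g s = g (s \<inter> J) * g (s - J)"
  shows "uncut g F s = uncut g F (s \<inter> J) * uncut g F (s - J)"
proof -
  have "(T \<subseteq> s \<or> T \<inter> s = {}) \<longleftrightarrow>
        (T \<subseteq> s \<inter> J \<or> T \<inter> (s \<inter> J) = {}) \<and> (T \<subseteq> s - J \<or> T \<inter> (s - J) = {})" if "T \<in> F" for T
    using assms(1) that by blast
  then show ?thesis unfolding uncut_def using assms(2) by auto
qed

lemma prod_indicator:
  assumes "finite A"
  shows "(\<Prod>v\<in>A. if P v then 1 else (0::real)) = (if \<forall>v\<in>A. P v then 1 else 0)"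
  using assms by (induction rule: finite_induct) auto

lemma prod_one_plus_over_colour_classes:
  fixes y :: "'i set \<Rightarrow> real"
  assumes "finite I"
  shows "(\<Prod>v<z. \<Prod>T\<in>Pow (colour_class f I v) - {{}}. 1 + y T)
       = (\<Sum>F\<in>Pow (monochromatic_sets f I z). \<Prod>T\<in>F. y T)"
proof -
  have "(\<Prod>v<z. \<Prod>T\<in>Pow (colour_class f I v) - {{}}. 1 + y T)
      = (\<Prod>T\<in>(\<Union>v<z. Pow (colour_class f I v) - {{}}). 1 + y T)"
    by (rule prod.UNION_disjoint[symmetric])
      (auto simp: colour_class_def intro: finite_subset[OF _ assms])
  also have "(\<Union>v<z. Pow (colour_class f I v) - {{}}) = monochromatic_sets f I z"
    by (auto simp: monochromatic_sets_def colour_class_def)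
  also have "(\<Prod>T\<in>monochromatic_sets f I z. 1 + y T) = (\<Sum>F\<in>Pow (monochromatic_sets f I z). \<Prod>T\<in>F. y T)"
    using prod_add[of "monochromatic_sets f I z" y "\<lambda>_. 1"] assms
    by (simp add: monochromatic_sets_def add.commute)
  finally show ?thesis .
qed

lemma subset_monochromatic_sets_iff:
  assumes f: "f \<in> I \<rightarrow>\<^sub>E {..<z}" and F: "F \<subseteq> Pow I - {{}}"
  shows "F \<subseteq> monochromatic_sets f I z \<longleftrightarrow>
    (\<forall>v<z. \<forall>T\<in>F. T \<subseteq> colour_class f I v \<or> T \<inter> colour_class f I v = {})"
proof
  assume "F \<subseteq> monochromatic_sets f I z"
  then show "\<forall>v<z. \<forall>T\<in>F. T \<subseteq> colour_class f I v \<or> T \<inter> colour_class f I v = {}"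
    unfolding monochromatic_sets_def colour_class_def by blast
next
  assume no_cut: "\<forall>v<z. \<forall>T\<in>F. T \<subseteq> colour_class f I v \<or> T \<inter> colour_class f I v = {}"
  show "F \<subseteq> monochromatic_sets f I z"
  proof
    fix T assume T: "T \<in> F"
    then obtain i where i: "i \<in> T" "i \<in> I" using F by blast
    then have "f i < z" "T \<inter> colour_class f I (f i) \<noteq> {}"
      using f unfolding colour_class_def by auto
    then show "T \<in> monochromatic_sets f I z"
      using no_cut T F unfolding monochromatic_sets_def by blast
  qed
qed

text \<open>The colouring sum of \<open>uncut g F\<close> runs over the colourings in which every cluster of \<open>F\<close>
  is monochromatic.\<close>
lemma colouring_sum_cluster_expansion:
  assumes I: "finite I" and m: "\<And>s. s \<subseteq> I \<Longrightarrow> m s = g s * (\<Prod>T\<in>Pow s - {{}}. 1 + y T)"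
  shows "colouring_sum m I z
       = (\<Sum>F\<in>Pow (Pow I - {{}}). (\<Prod>T\<in>F. y T) * colouring_sum (uncut g F) I z)"
proof -
  let ?E = "Pow I - {{}}"
  let ?g = "\<lambda>f. \<Prod>v<z. g (colour_class f I v)"
  have "(\<Prod>v<z. m (colour_class f I v)) = (\<Sum>F\<in>Pow ?E. if F \<subseteq> monochromatic_sets f I z
          then ?g f * (\<Prod>T\<in>F. y T) else 0)" for f
  proof -
    have "(\<Prod>v<z. m (colour_class f I v))
        = ?g f * (\<Prod>v<z. \<Prod>T\<in>Pow (colour_class f I v) - {{}}. 1 + y T)"
      using m by (simp add: colour_class_def prod.distrib)
    also have "\<dots> = (\<Sum>F\<in>Pow (monochromatic_sets f I z). ?g f * (\<Prod>T\<in>F. y T))"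
      by (simp add: prod_one_plus_over_colour_classes[OF I] sum_distrib_left)
    also have "\<dots> = (\<Sum>F\<in>Pow ?E. if F \<subseteq> monochromatic_sets f I z then ?g f * (\<Prod>T\<in>F. y T) else 0)"
      using I by (intro sum.mono_neutral_cong_left) (auto simp: monochromatic_sets_def)
    finally show ?thesis .
  qed
  then have "colouring_sum m I z = (\<Sum>F\<in>Pow ?E. \<Sum>f\<in>I \<rightarrow>\<^sub>E {..<z}.
      if F \<subseteq> monochromatic_sets f I z then ?g f * (\<Prod>T\<in>F. y T) else 0)"
    unfolding colouring_sum_def by (simp add: sum.swap[of _ "Pow ?E"])
  also have "\<dots> = (\<Sum>F\<in>Pow ?E. (\<Prod>T\<in>F. y T) * colouring_sum (uncut g F) I z)"
    unfolding colouring_sum_def sum_distrib_left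
  proof (intro sum.cong refl)
    fix F f assume F: "F \<in> Pow ?E" and f: "f \<in> I \<rightarrow>\<^sub>E {..<z}"
    have "(\<Prod>v<z. uncut g F (colour_class f I v)) = ?g f *
        (\<Prod>v<z. if \<forall>T\<in>F. T \<subseteq> colour_class f I v \<or> T \<inter> colour_class f I v = {} then 1 else 0)"
      unfolding uncut_def by (rule prod.distrib)
    also have "\<dots> = ?g f * (if F \<subseteq> monochromatic_sets f I z then 1 else 0)"
      using F unfolding subset_monochromatic_sets_iff[OF f, of F, OF F[simplified]]
      by (simp add: prod_indicator Ball_def)
    finally show "(if F \<subseteq> monochromatic_sets f I z then ?g f * (\<Prod>T\<in>F. y T) else 0) =
               (\<Prod>T\<in>F. y T) * (\<Prod>v<z. uncut g F (colour_class f I v))"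
      by simp
  qed
  finally show ?thesis .
qed

lemma coeff_cumulant_poly_cluster_expansion:
  assumes I: "finite I" and g: "g {} = 1" and m0: "m {} = 1"
    and m: "\<And>s. s \<subseteq> I \<Longrightarrow> m s = g s * (\<Prod>T\<in>Pow s - {{}}. 1 + y T)"
  shows "coeff (cumulant_poly m I) 1
       = (\<Sum>F\<in>Pow (Pow I - {{}}). (\<Prod>T\<in>F. y T) * coeff (cumulant_poly (uncut g F) I) 1)"
proof -
  have uncut0: "uncut g F {} = 1" for F unfolding uncut_def using g by simp
  have "cumulant_poly m I
      = (\<Sum>F\<in>Pow (Pow I - {{}}). smult (\<Prod>T\<in>F. y T) (cumulant_poly (uncut g F) I))"
    by (rule poly_eq_if_eq_on_nat)
      (simp add: poly_sum poly_cumulant_poly[OF I] m0 uncut0 colouring_sum_cluster_expansion[OF I m])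
  then show ?thesis by (simp add: coeff_sum)
qed

lemma card_collapse_image:
  assumes "finite C" "D \<subseteq> C" "d \<in> D"
  shows "card ((\<lambda>c. if c \<in> D then d else c) ` C) = card C - card D + 1"
proof -
  have "(\<lambda>c. if c \<in> D then d else c) ` C = insert d (C - D)" using assms by auto
  moreover have "card (C - D) = card C - card D"
    using assms by (simp add: card_Diff_subset finite_subset)
  ultimately show ?thesis using assms by simp
qed

text \<open>Edges \<open>D T\<close> of total excess \<open>\<Sum>(|D T| - 1) < |C| - 1\<close> cannot connect the vertex set \<open>C\<close>.
  Induction on the number of edges, contracting one edge to a point.\<close>
lemma exists_separating_subset:
  assumes "finite F" "finite C" "\<forall>T\<in>F. D T \<subseteq> C \<and> D T \<noteq> {}"
    "(\<Sum>T\<in>F. card (D T) - 1) + 1 < card C"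
  shows "\<exists>J. J \<subseteq> C \<and> J \<noteq> {} \<and> J \<noteq> C \<and> (\<forall>T\<in>F. D T \<subseteq> J \<or> D T \<inter> J = {})"
  using assms
proof (induction F arbitrary: C D rule: finite_induct)
  case empty
  then have "card C \<ge> 2" by simp
  then obtain c where "c \<in> C" by (metis all_not_in_conv card.empty not_numeral_le_zero)
  moreover have "{c} \<noteq> C" using \<open>card C \<ge> 2\<close> by auto
  ultimately show ?case by (intro exI[of _ "{c}"]) auto
next
  case (insert T F)
  have DT: "D T \<subseteq> C" "D T \<noteq> {}" using insert.prems by auto
  then obtain d where d: "d \<in> D T" by auto
  define \<phi> where "\<phi> c = (if c \<in> D T then d else c)" for c
  have "card (\<phi> ` C) = card C - card (D T) + 1"
    unfolding \<phi>_def using insert.prems(1) DT(1) d by (rule card_collapse_image)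
  moreover have "finite (D T)" using DT(1) insert.prems(1) finite_subset by blast
  then have "card (D T) \<le> card C" "card (D T) \<noteq> 0"
    using DT insert.prems(1) card_mono by auto
  moreover have "card (\<phi> ` D U) - 1 \<le> card (D U) - 1" if "U \<in> F" for U
    using insert.prems(1,2) that card_image_le[of "D U" \<phi>] finite_subset by fastforce
  then have "(\<Sum>U\<in>F. card (\<phi> ` D U) - 1) \<le> (\<Sum>U\<in>F. card (D U) - 1)" by (rule sum_mono)
  ultimately have "(\<Sum>U\<in>F. card (\<phi> ` D U) - 1) + 1 < card (\<phi> ` C)"
    using insert.prems(3) insert.hyps by simp
  moreover have "\<forall>U\<in>F. \<phi> ` D U \<subseteq> \<phi> ` C \<and> \<phi> ` D U \<noteq> {}" using insert.prems by auto
  ultimately obtain J' where J': "J' \<subseteq> \<phi> ` C" "J' \<noteq> {}" "J' \<noteq> \<phi> ` C"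
      "\<forall>U\<in>F. \<phi> ` D U \<subseteq> J' \<or> \<phi> ` D U \<inter> J' = {}"
    using insert.IH[of "\<phi> ` C" "\<lambda>U. \<phi> ` D U"] insert.prems(1) by auto
  define J where "J = {c \<in> C. \<phi> c \<in> J'}"
  have "J \<noteq> {}" "J \<noteq> C" using J'(1-3) unfolding J_def by auto
  moreover have "D U \<subseteq> J \<or> D U \<inter> J = {}" if "U \<in> insert T F" for U
  proof (cases "U = T")
    case True
    then show ?thesis using DT unfolding J_def \<phi>_def by (cases "d \<in> J'") auto
  next
    case False
    then show ?thesis using that J'(4) insert.prems(2) unfolding J_def by blast
  qed
  moreover have "J \<subseteq> C" unfolding J_def by blast
  ultimately show ?case by (intro exI[of _ J]) blast
qed

section \<open>Permutations with prescribed values\<close>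

definition injective_pairs :: "('a \<times> 'b) set \<Rightarrow> bool" where
  "injective_pairs S \<longleftrightarrow> inj_on fst S \<and> inj_on snd S"

definition perms_extending :: "'a set \<Rightarrow> ('a \<times> 'a) set \<Rightarrow> ('a \<Rightarrow> 'a) set" where
  "perms_extending A S = {\<pi>. \<pi> permutes A \<and> (\<forall>p\<in>S. \<pi> (fst p) = snd p)}"

lemma injective_pairs_if_extended:
  assumes "inj \<pi>" "\<forall>p\<in>S. \<pi> (fst p) = snd p"
  shows "injective_pairs S"
  unfolding injective_pairs_def
proof
  show "inj_on fst S" using assms(2) by (intro inj_onI) (metis prod.expand)
  show "inj_on snd S" using assms by (intro inj_onI) (metis injD prod.expand)
qed

lemma perms_extending_eq_empty: "\<not> injective_pairs S \<Longrightarrow> perms_extending A S = {}"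
  unfolding perms_extending_def using injective_pairs_if_extended permutes_inj by blast

lemma card_Diff_image:
  assumes "finite A" "f ` S \<subseteq> A" "inj_on f S"
  shows "card (A - f ` S) = card A - card S"
  using assms by (simp add: card_Diff_subset card_image finite_subset)

lemma exists_perm_extending:
  assumes A: "finite A" and S: "S \<subseteq> A \<times> A" "injective_pairs S"
  obtains \<pi>0 where "\<pi>0 permutes A" "\<forall>p\<in>S. \<pi>0 (fst p) = snd p"
proof -
  have inj: "inj_on fst S" "inj_on snd S" using S(2) unfolding injective_pairs_def by auto
  define h where "h = snd \<circ> the_inv_into S fst"
  have h: "h (fst p) = snd p" if "p \<in> S" for p
    unfolding h_def using the_inv_into_f_f[OF inj(1) that] by simp
  have "bij_betw h (fst ` S) (snd ` S)"
    unfolding h_def using bij_betw_the_inv_into[OF inj_on_imp_bij_betw[OF inj(1)]]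
      inj_on_imp_bij_betw[OF inj(2)] by (rule bij_betw_trans)
  moreover obtain g where "bij_betw g (A - fst ` S) (A - snd ` S)"
  proof -
    have "card (A - fst ` S) = card (A - snd ` S)"
      using card_Diff_image[OF A _ inj(1)] card_Diff_image[OF A _ inj(2)] S(1) by force
    then show ?thesis using finite_same_card_bij[of "A - fst ` S" "A - snd ` S"] A that by auto
  qed
  ultimately have "bij_betw h (fst ` S) (snd ` S)" "bij_betw g (A - fst ` S) (A - snd ` S)" .
  define \<pi>0 where "\<pi>0 x = (if x \<in> fst ` S then h x else if x \<in> A then g x else x)" for x
  have "bij_betw \<pi>0 (fst ` S) (snd ` S)"
    using \<open>bij_betw h _ _\<close> by (rule bij_betw_cong[THEN iffD1, rotated]) (simp add: \<pi>0_def)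
  moreover have "bij_betw \<pi>0 (A - fst ` S) (A - snd ` S)"
    using \<open>bij_betw g _ _\<close> by (rule bij_betw_cong[THEN iffD1, rotated]) (simp add: \<pi>0_def)
  ultimately have "bij_betw \<pi>0 (fst ` S \<union> (A - fst ` S)) (snd ` S \<union> (A - snd ` S))"
    by (rule bij_betw_combine) auto
  moreover have "fst ` S \<union> (A - fst ` S) = A" "snd ` S \<union> (A - snd ` S) = A" using S(1) by auto
  ultimately have "\<pi>0 permutes A" using S(1) by (intro bij_imp_permutes) (auto simp: \<pi>0_def)
  then show ?thesis using that h by (force simp: \<pi>0_def)
qed

lemma perms_extending_eq_image:
  assumes \<pi>0: "\<pi>0 permutes A" "\<forall>p\<in>S. \<pi>0 (fst p) = snd p"
  shows "perms_extending A S = (\<lambda>\<rho>. \<pi>0 \<circ> \<rho>) ` {\<rho>. \<rho> permutes (A - fst ` S)}"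
proof (intro equalityI subsetI)
  fix \<pi> assume "\<pi> \<in> perms_extending A S"
  then have \<pi>: "\<pi> permutes A" "\<forall>p\<in>S. \<pi> (fst p) = snd p" unfolding perms_extending_def by auto
  define \<rho> where "\<rho> = inv \<pi>0 \<circ> \<pi>"
  have "\<rho> permutes A" unfolding \<rho>_def by (rule permutes_compose[OF \<pi>(1) permutes_inv[OF \<pi>0(1)]])
  moreover have "\<rho> a = a" if a: "a \<in> fst ` S" for a
  proof -
    obtain p where "p \<in> S" "a = fst p" using a by blast
    then have "\<pi> a = \<pi>0 a" using \<pi>(2) \<pi>0(2) by simp
    then show ?thesis unfolding \<rho>_def using permutes_inverses(2)[OF \<pi>0(1)] by simp
  qed
  ultimately have "\<rho> permutes (A - fst ` S)"
    unfolding permutes_def by (metis Diff_iff)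
  moreover have "\<pi> = \<pi>0 \<circ> \<rho>" unfolding \<rho>_def by (simp add: o_assoc permutes_inv_o(1)[OF \<pi>0(1)])
  ultimately show "\<pi> \<in> (\<lambda>\<rho>. \<pi>0 \<circ> \<rho>) ` {\<rho>. \<rho> permutes (A - fst ` S)}" by blast
next
  fix \<pi> assume "\<pi> \<in> (\<lambda>\<rho>. \<pi>0 \<circ> \<rho>) ` {\<rho>. \<rho> permutes (A - fst ` S)}"
  then obtain \<rho> where \<rho>: "\<rho> permutes (A - fst ` S)" "\<pi> = \<pi>0 \<circ> \<rho>" by auto
  have "\<pi> permutes A"
    using \<rho> permutes_compose[OF permutes_subset[OF \<rho>(1)] \<pi>0(1)] by auto
  moreover have "\<pi> (fst p) = snd p" if "p \<in> S" for p
    using that \<rho> \<pi>0(2) permutes_not_in[OF \<rho>(1)] by auto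
  ultimately show "\<pi> \<in> perms_extending A S" unfolding perms_extending_def by auto
qed

lemma card_perms_extending:
  assumes A: "finite A" and S: "S \<subseteq> A \<times> A" "injective_pairs S"
  shows "card (perms_extending A S) = fact (card A - card S)"
proof -
  obtain \<pi>0 where \<pi>0: "\<pi>0 permutes A" "\<forall>p\<in>S. \<pi>0 (fst p) = snd p"
    using exists_perm_extending[OF assms] by blast
  have "inj_on (\<lambda>\<rho>. \<pi>0 \<circ> \<rho>) {\<rho>. \<rho> permutes (A - fst ` S)}"
  proof (rule inj_onI)
    fix \<rho> \<rho>' assume "\<pi>0 \<circ> \<rho> = \<pi>0 \<circ> \<rho>'"
    then have "\<pi>0 (\<rho> x) = \<pi>0 (\<rho>' x)" for x by (metis comp_apply)
    then show "\<rho> = \<rho>'" using permutes_inj[OF \<pi>0(1)] by (simp add: fun_eq_iff inj_eq)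
  qed
  then have "card (perms_extending A S) = card {\<rho>. \<rho> permutes (A - fst ` S)}"
    unfolding perms_extending_eq_image[OF \<pi>0] by (rule card_image)
  also have "\<dots> = fact (card (A - fst ` S))" using A by (simp add: card_permutations)
  also have "card (A - fst ` S) = card A - card S"
    using card_Diff_image[of A fst S] S A unfolding injective_pairs_def by force
  finally show ?thesis .
qed

lemma inj_on_UN_disjoint_images:
  assumes "\<And>c. c \<in> C \<Longrightarrow> inj_on f (S c)"
    and "\<And>c c'. c \<in> C \<Longrightarrow> c' \<in> C \<Longrightarrow> c \<noteq> c' \<Longrightarrow> f ` S c \<inter> f ` S c' = {}"
  shows "inj_on f (\<Union>c\<in>C. S c)"
proof (rule inj_onI)
  fix p q assume "p \<in> (\<Union>c\<in>C. S c)" "q \<in> (\<Union>c\<in>C. S c)" and eq: "f p = f q"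
  then obtain c c' where c: "c \<in> C" "p \<in> S c" "c' \<in> C" "q \<in> S c'" by auto
  then have "c = c'" using assms(2)[of c c'] eq by blast
  then show "p = q" using assms(1) c eq by (auto dest: inj_onD)
qed

lemma injective_pairs_UN:
  assumes "\<And>c c'. c \<in> C \<Longrightarrow> c' \<in> C \<Longrightarrow> c \<noteq> c' \<Longrightarrow> fst ` S c \<inter> fst ` S c' = {}"
    "\<And>c c'. c \<in> C \<Longrightarrow> c' \<in> C \<Longrightarrow> c \<noteq> c' \<Longrightarrow> snd ` S c \<inter> snd ` S c' = {}"
  shows "injective_pairs (\<Union>c\<in>C. S c) \<longleftrightarrow> (\<forall>c\<in>C. injective_pairs (S c))"
  using assms inj_on_UN_disjoint_images[of C fst S] inj_on_UN_disjoint_images[of C snd S]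
  unfolding injective_pairs_def by (auto intro: inj_on_subset)

section \<open>Falling factorials and logarithms\<close>

lemma fact_eq_falling_fact: "k \<le> N \<Longrightarrow> real (fact N) = real (fact (N - k)) * falling_fact (real N) k"
proof (induction k)
  case 0
  then show ?case by (simp add: falling_fact_def)
next
  case (Suc k)
  have N_k: "N - k = Suc (N - Suc k)" using Suc.prems by simp
  have "real (fact N) = real (fact (N - k)) * falling_fact (real N) k" using Suc by simp
  also have "real (fact (N - k)) = real (N - k) * real (fact (N - Suc k))"
    by (simp only: N_k fact_Suc of_nat_mult of_nat_id)
  also have "real (N - k) = real N - real k" using Suc.prems by simp
  finally show ?case by (simp add: falling_fact_def algebra_simps)
qed

lemma falling_fact_pos: "k \<le> N \<Longrightarrow> falling_fact (real N) k > 0"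
  unfolding falling_fact_def by (intro prod_pos) auto

lemma falling_fact_ge:
  assumes "2 * k \<le> N"
  shows "(real N / 2) ^ k \<le> falling_fact (real N) k"
proof -
  have "(real N / 2) ^ k = (\<Prod>j<k. real N / 2)" by simp
  also have "\<dots> \<le> falling_fact (real N) k" unfolding falling_fact_def
    by (rule prod_mono) (use assms in auto)
  finally show ?thesis .
qed

definition log_remainder :: "nat \<Rightarrow> real \<Rightarrow> real" where
  "log_remainder p u = ln (1 - u) + (\<Sum>m\<in>{1..p}. u ^ m / real m)"

lemma abs_log_remainder_le:
  assumes u: "0 \<le> u" "u \<le> 1/2"
  shows "\<bar>log_remainder p u\<bar> \<le> 2 * u ^ Suc p"
proof (cases "u = 0")
  case True
  moreover have "(\<Sum>m\<in>{1..p}. u ^ m / real m) = 0" using True by (intro sum.neutral) auto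
  ultimately show ?thesis by (simp add: log_remainder_def)
next
  case False
  then have u0: "0 < u" using u by simp
  define G where "G x = ln (1 - x) + (\<Sum>m\<in>{1..p}. x ^ m / real m)" for x :: real
  define G' where "G' x = - 1 / (1 - x) + (\<Sum>m\<in>{1..p}. x ^ (m - 1))" for x :: real
  have "(G has_real_derivative G' x) (at x)" if "0 \<le> x" "x \<le> u" for x
  proof -
    have "((\<lambda>x. ln (1 - x)) has_real_derivative (- 1 / (1 - x))) (at x)"
      using that u by (auto intro!: derivative_eq_intros simp: field_simps)
    moreover have "((\<lambda>x. x ^ m / real m) has_real_derivative x ^ (m - 1)) (at x)"
      if "m \<in> {1..p}" for m
      using that by (auto intro!: derivative_eq_intros simp: field_simps)
    ultimately show ?thesis unfolding G_def G'_def by (intro DERIV_add DERIV_sum) auto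
  qed
  then obtain \<xi> where \<xi>: "0 < \<xi>" "\<xi> < u" "G u - G 0 = (u - 0) * G' \<xi>"
    using MVT2[OF u0, of G G'] by auto
  have "(\<Sum>m\<in>{1..p}. \<xi> ^ (m - 1)) = (\<Sum>i<p. \<xi> ^ i)"
    by (rule sum.reindex_bij_witness[where i=Suc and j="\<lambda>m. m - 1"]) auto
  also have "\<dots> = (1 - \<xi> ^ p) / (1 - \<xi>)" using sum_gp_strict[of \<xi> p] \<xi> u by simp
  finally have "G' \<xi> = (- 1 + (1 - \<xi> ^ p)) / (1 - \<xi>)"
    unfolding G'_def by (simp only: add_divide_distrib)
  then have "G' \<xi> = - (\<xi> ^ p) / (1 - \<xi>)" by simp
  then have "\<bar>G' \<xi>\<bar> = \<xi> ^ p / (1 - \<xi>)" using \<xi> u by simp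
  also have "\<dots> \<le> u ^ p / (1/2)" by (intro frac_le power_mono) (use \<xi> u in auto)
  finally have "\<bar>G' \<xi>\<bar> \<le> u ^ p / (1/2)" .
  moreover have "G 0 = 0" unfolding G_def by (auto intro: sum.neutral)
  ultimately have "\<bar>G u\<bar> \<le> u * (2 * u ^ p)"
    using \<xi> u0 by (simp add: abs_mult mult_left_mono)
  then show ?thesis unfolding G_def log_remainder_def by (simp add: algebra_simps)
qed

lemma ln_falling_fact_expansion:
  assumes "0 < N" "k \<le> N"
  shows "ln (falling_fact (real N) k) = ln (real N) * power_sum 0 k
           - (\<Sum>m\<in>{1..p}. (1 / real N) ^ m / real m * power_sum m k)
           + (\<Sum>j<k. log_remainder p (real j / real N))"
proof -
  have "ln (falling_fact (real N) k) = (\<Sum>j<k. ln (real N - real j))"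
    unfolding falling_fact_def by (rule ln_prod) (use assms in auto)
  also have "\<dots> = (\<Sum>j<k. ln (real N) + ln (1 - real j / real N))"
  proof (rule sum.cong[OF refl])
    fix j assume "j \<in> {..<k}"
    then have "real N - real j = real N * (1 - real j / real N)" "1 - real j / real N > 0"
      using assms by (auto simp: field_simps)
    then show "ln (real N - real j) = ln (real N) + ln (1 - real j / real N)"
      using assms by (simp add: ln_mult)
  qed
  also have "\<dots> = ln (real N) * power_sum 0 k + (\<Sum>j<k. ln (1 - real j / real N))"
    by (simp add: sum.distrib power_sum_def)
  also have "(\<Sum>j<k. ln (1 - real j / real N)) = (\<Sum>j<k. log_remainder p (real j / real N))
      - (\<Sum>m\<in>{1..p}. \<Sum>j<k. (real j / real N) ^ m / real m)"
    unfolding log_remainder_def sum.distrib using sum.swap[of _ "{1..p}" "{..<k}"] by simp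
  also have "(\<Sum>m\<in>{1..p}. \<Sum>j<k. (real j / real N) ^ m / real m) =
             (\<Sum>m\<in>{1..p}. (1 / real N) ^ m / real m * power_sum m k)"
    unfolding power_sum_def
    by (intro sum.cong refl) (simp add: sum_distrib_left sum_divide_distrib power_divide)
  finally show ?thesis by simp
qed

lemma abs_sum_log_remainder_le:
  assumes "0 < N" "2 * L \<le> N" "k \<le> L"
  shows "\<bar>\<Sum>j<k. log_remainder p (real j / real N)\<bar> \<le> 2 * real L * (real L / real N) ^ Suc p"
proof -
  have "\<bar>log_remainder p (real j / real N)\<bar> \<le> 2 * (real L / real N) ^ Suc p" if "j < k" for j
  proof -
    have "\<bar>log_remainder p (real j / real N)\<bar> \<le> 2 * (real j / real N) ^ Suc p"
      using assms that by (intro abs_log_remainder_le) auto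
    also have "\<dots> \<le> 2 * (real L / real N) ^ Suc p"
      using assms that by (intro mult_left_mono power_mono divide_right_mono) auto
    finally show ?thesis .
  qed
  then have "\<bar>\<Sum>j<k. log_remainder p (real j / real N)\<bar> \<le> (\<Sum>j<k. 2 * (real L / real N) ^ Suc p)"
    by (intro order.trans[OF sum_abs] sum_mono) auto
  also have "\<dots> = real k * (2 * (real L / real N) ^ Suc p)" by simp
  also have "\<dots> \<le> real L * (2 * (real L / real N) ^ Suc p)"
    using assms(3) by (intro mult_right_mono) auto
  finally show ?thesis by (simp add: mult_ac)
qed

lemma abs_exp_minus_one_le:
  fixes u :: real
  assumes "\<bar>u\<bar> \<le> 1/2"
  shows "\<bar>exp u - 1\<bar> \<le> 2 * \<bar>u\<bar>"
proof (cases "u \<ge> 0")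
  case True
  have "exp u \<le> 1 + u + u\<^sup>2" by (rule exp_bound) (use True assms in auto)
  moreover have "u\<^sup>2 \<le> u" using True assms mult_right_le_one_le[of u u] by (simp add: power2_eq_square)
  ultimately show ?thesis using True by simp
next
  case False
  then have "\<bar>exp u - 1\<bar> = 1 - exp u" by simp
  then show ?thesis using exp_ge_add_one_self[of u] False by linarith
qed

section \<open>Moments of a family of matching events\<close>

definition total_length :: "nat \<Rightarrow> (nat \<Rightarrow> nat) \<Rightarrow> nat" where
  "total_length r l = (\<Sum>i\<in>{1..r}. l i)"

locale matching_family =
  fixes r :: nat and l :: "nat \<Rightarrow> nat" and \<alpha> \<beta> :: "nat \<Rightarrow> nat \<Rightarrow> nat" and N :: nat
  assumes rng: "\<forall>i\<in>{1..r}. \<forall>j\<in>{1..l i}. \<alpha> i j \<in> {1..N} \<and> \<beta> i j \<in> {1..N}"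
begin

definition pairs :: "nat set \<Rightarrow> (nat \<times> nat) set" where
  "pairs V = (\<Union>i\<in>V. (\<lambda>j. (\<alpha> i j, \<beta> i j)) ` {1..l i})"

definition npairs :: "nat set \<Rightarrow> nat" where
  "npairs V = card (pairs V)"

definition moment :: "nat set \<Rightarrow> real" where
  "moment V = integral\<^sup>L (unif_perm N) (\<lambda>\<pi>. \<Prod>i\<in>V. match_indicator l \<alpha> \<beta> i \<pi>)"

definition linked :: "(nat \<times> nat) set" where
  "linked = (dep_edges r l \<alpha> \<beta> \<union> Id_on {1..r})\<^sup>*"

definition components :: "nat set set" where
  "components = {1..r} // linked"

lemma finite_pairs: "finite V \<Longrightarrow> finite (pairs V)"
  unfolding pairs_def by auto

lemma pairs_subset: "V \<subseteq> {1..r} \<Longrightarrow> pairs V \<subseteq> {1..N} \<times> {1..N}"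
  unfolding pairs_def using rng by auto

lemma pairs_mono: "V \<subseteq> W \<Longrightarrow> pairs V \<subseteq> pairs W"
  unfolding pairs_def by auto

lemma npairs_le_total_length:
  assumes "V \<subseteq> {1..r}"
  shows "npairs V \<le> total_length r l"
proof -
  have "npairs V \<le> npairs {1..r}" unfolding npairs_def
    by (rule card_mono) (use finite_pairs pairs_mono assms in auto)
  also have "\<dots> \<le> (\<Sum>i\<in>{1..r}. card ((\<lambda>j. (\<alpha> i j, \<beta> i j)) ` {1..l i}))"
    unfolding npairs_def pairs_def by (rule card_UN_le) simp
  also have "\<dots> \<le> total_length r l" unfolding total_length_def
  proof (rule sum_mono)
    fix i
    have "card ((\<lambda>j. (\<alpha> i j, \<beta> i j)) ` {1..l i}) \<le> card {1..l i}" by (rule card_image_le) simp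
    then show "card ((\<lambda>j. (\<alpha> i j, \<beta> i j)) ` {1..l i}) \<le> l i" by simp
  qed
  finally show ?thesis .
qed

lemma prod_match_indicator:
  assumes "finite V"
  shows "(\<Prod>i\<in>V. match_indicator l \<alpha> \<beta> i \<pi>) = (if \<forall>p\<in>pairs V. \<pi> (fst p) = snd p then 1 else 0)"
proof -
  have "(\<Prod>i\<in>V. match_indicator l \<alpha> \<beta> i \<pi>) =
        (\<Prod>i\<in>V. if \<forall>j\<in>{1..l i}. \<pi> (\<alpha> i j) = \<beta> i j then 1 else 0)"
    unfolding match_indicator_def by (intro prod.cong refl) (simp add: prod_indicator)
  also have "\<dots> = (if \<forall>i\<in>V. \<forall>j\<in>{1..l i}. \<pi> (\<alpha> i j) = \<beta> i j then 1 else 0)"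
    using assms by (simp add: prod_indicator)
  also have "(\<forall>i\<in>V. \<forall>j\<in>{1..l i}. \<pi> (\<alpha> i j) = \<beta> i j) = (\<forall>p\<in>pairs V. \<pi> (fst p) = snd p)"
    unfolding pairs_def by auto
  finally show ?thesis .
qed

lemma moment_eq_card:
  assumes "finite V"
  shows "moment V = real (card (perms_extending {1..N} (pairs V))) / fact N"
proof -
  let ?P = "{\<pi>. \<pi> permutes {1..N}}"
  have fin: "finite ?P" by (rule finite_permutations) simp
  have ne: "?P \<noteq> {}" using permutes_id by blast
  have cardP: "card ?P = fact N" using card_permutations[of "{1..N}" N] by simp
  have "moment V = (\<Sum>\<pi>\<in>?P. if \<forall>p\<in>pairs V. \<pi> (fst p) = snd p then 1 else 0) / real (card ?P)"
    unfolding moment_def unif_perm_def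
    using integral_pmf_of_set[OF ne fin] prod_match_indicator[OF assms] by simp
  also have "(\<Sum>\<pi>\<in>?P. if \<forall>p\<in>pairs V. \<pi> (fst p) = snd p then 1 else 0)
      = real (card (perms_extending {1..N} (pairs V)))"
    unfolding perms_extending_def using sum.inter_filter[OF fin, of "\<lambda>_. 1::real", symmetric]
    by simp
  finally show ?thesis using cardP by simp
qed

lemma moment_nonneg: "finite V \<Longrightarrow> 0 \<le> moment V"
  using moment_eq_card by simp

lemma moment_le_1: "finite V \<Longrightarrow> moment V \<le> 1"
proof -
  assume fV: "finite V"
  have "card (perms_extending {1..N} (pairs V)) \<le> card {\<pi>. \<pi> permutes {1..N}}"
    by (rule card_mono) (auto simp: finite_permutations perms_extending_def)
  also have "\<dots> = fact N" using card_permutations[of "{1..N}" N] by simp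
  finally have "real (card (perms_extending {1..N} (pairs V))) \<le> real (fact N)" by linarith
  then show ?thesis using moment_eq_card[OF fV] by (simp add: divide_le_eq_1)
qed

lemma moment_eq:
  assumes V: "V \<subseteq> {1..r}" and kN: "npairs V \<le> N"
  shows "moment V = (if injective_pairs (pairs V) then 1 / falling_fact (real N) (npairs V) else 0)"
proof -
  have fV: "finite V" by (rule finite_subset[OF V]) simp
  show ?thesis
  proof (cases "injective_pairs (pairs V)")
    case True
    have "card (perms_extending {1..N} (pairs V)) = fact (N - npairs V)"
      using card_perms_extending[OF _ pairs_subset[OF V] True] unfolding npairs_def by simp
    moreover have "real (fact N) = real (fact (N - npairs V)) * falling_fact (real N) (npairs V)"
      by (rule fact_eq_falling_fact[OF kN])
    moreover have "real (fact (N - npairs V)) > 0" by simp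
    ultimately show ?thesis using True moment_eq_card[OF fV] by simp
  next
    case False
    then show ?thesis using moment_eq_card[OF fV] perms_extending_eq_empty[OF False] by simp
  qed
qed

lemma npairs_empty: "npairs {} = 0"
  unfolding npairs_def pairs_def by simp

lemma moment_empty: "moment {} = 1"
proof -
  have "injective_pairs (pairs {})" unfolding pairs_def injective_pairs_def by simp
  then show ?thesis using moment_eq[of "{}"] npairs_empty by (simp add: falling_fact_def)
qed

lemma dep_edges_subset: "dep_edges r l \<alpha> \<beta> \<subseteq> {1..r} \<times> {1..r}"
  unfolding dep_edges_def by auto

lemma linked_closed:
  assumes "(i, x) \<in> linked" "i \<in> {1..r}"
  shows "x \<in> {1..r}"
  using assms(1,2) unfolding linked_def
proof (induction rule: rtrancl_induct)
  case base
  then show ?case .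
next
  case (step y z)
  then show ?case using dep_edges_subset by auto
qed

text \<open>\<open>linked\<close> relates every \<open>x\<close> to itself, also outside \<open>[r]\<close>, so it is an equivalence
  relation on \<open>[r]\<close> only after restriction.\<close>
definition linked_on :: "(nat \<times> nat) set" where
  "linked_on = linked \<inter> {1..r} \<times> {1..r}"

lemma equiv_linked_on: "equiv {1..r} linked_on"
proof -
  have "sym (dep_edges r l \<alpha> \<beta> \<union> Id_on {1..r})"
    unfolding sym_def dep_edges_def by auto
  then have s: "sym linked" unfolding linked_def by (rule sym_rtrancl)
  have t: "trans linked" unfolding linked_def by (rule trans_rtrancl)
  have a: "linked_on \<subseteq> {1..r} \<times> {1..r}" unfolding linked_on_def by auto
  have b: "refl_on {1..r} linked_on" unfolding refl_on_def linked_on_def linked_def by auto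
  have c: "sym linked_on" using s unfolding linked_on_def sym_def by blast
  have d: "trans linked_on" using t unfolding linked_on_def trans_def by blast
  show ?thesis unfolding equiv_def using a b c d by blast
qed

lemma components_eq: "components = {1..r} // linked_on"
proof -
  have "linked `` {i} = linked_on `` {i}" if "i \<in> {1..r}" for i
    unfolding linked_on_def using linked_closed that by auto
  then show ?thesis unfolding components_def quotient_def by auto
qed

lemma partition_on_components: "partition_on {1..r} components"
  unfolding components_eq by (rule partition_on_quotient[OF equiv_linked_on])

lemma finite_components: "finite components"
  using finite_elements[OF _ partition_on_components] by simp

lemma components_disjoint: "c \<in> components \<Longrightarrow> c' \<in> components \<Longrightarrow> c \<noteq> c' \<Longrightarrow> c \<inter> c' = {}"
  using quotient_disj[OF equiv_linked_on] unfolding components_eq by blast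

lemma components_subset: "c \<in> components \<Longrightarrow> c \<subseteq> {1..r}"
  using partition_on_components partition_onD1 by blast

lemma components_nonempty: "c \<in> components \<Longrightarrow> c \<noteq> {}"
  using partition_on_components partition_onD3 by blast

lemma Union_components: "\<Union>components = {1..r}"
  using partition_on_components partition_onD1 by blast

lemma components_dep_edge:
  assumes "c \<in> components" "c' \<in> components" "i \<in> c" "i' \<in> c'" "(i, i') \<in> dep_edges r l \<alpha> \<beta>"
  shows "c = c'"
proof -
  from assms(1) obtain i0 where i0: "c = linked_on `` {i0}" "i0 \<in> {1..r}"
    unfolding components_eq by (rule quotientE)
  have "(i0, i) \<in> linked_on" using assms(3) i0 by simp
  moreover have "(i, i') \<in> linked_on"
    using assms(5) dep_edges_subset unfolding linked_on_def linked_def by auto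
  ultimately have "(i0, i') \<in> linked_on" using equiv_linked_on unfolding equiv_def trans_def by blast
  then have "i' \<in> c \<inter> c'" using i0 assms(4) by simp
  then have "c \<inter> c' \<noteq> {}" by auto
  then show ?thesis using components_disjoint[OF assms(1,2)] by auto
qed

lemma card_components_le: "card components \<le> r"
  using card_partition_on_le[OF _ partition_on_components] by simp

lemma card_components_ge_1: "r \<ge> 1 \<Longrightarrow> card components \<ge> 1"
  using card_partition_on_ge_1[OF _ _ partition_on_components] by simp

lemma pairs_decomp:
  assumes "V \<subseteq> {1..r}"
  shows "pairs V = (\<Union>c\<in>components. pairs (V \<inter> c))"
proof
  show "pairs V \<subseteq> (\<Union>c\<in>components. pairs (V \<inter> c))"
  proof
    fix p assume "p \<in> pairs V"
    then obtain i where i: "i \<in> V" "p \<in> (\<lambda>j. (\<alpha> i j, \<beta> i j)) ` {1..l i}" unfolding pairs_def by blast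
    have "i \<in> \<Union>components" using Union_components assms i(1) by auto
    then obtain c where c: "c \<in> components" "i \<in> c" by blast
    have "p \<in> pairs (V \<inter> c)" unfolding pairs_def using i c by blast
    then show "p \<in> (\<Union>c\<in>components. pairs (V \<inter> c))" using c by blast
  qed
  show "(\<Union>c\<in>components. pairs (V \<inter> c)) \<subseteq> pairs V" using pairs_mono by blast
qed

lemma fst_pairs: "fst ` pairs W = (\<Union>i\<in>W. \<alpha> i ` {1..l i})"
  unfolding pairs_def by force

lemma snd_pairs: "snd ` pairs W = (\<Union>i\<in>W. \<beta> i ` {1..l i})"
  unfolding pairs_def by force

lemma components_share_no_values:
  assumes "c \<in> components" "c' \<in> components" "c \<noteq> c'" "i \<in> c" "i' \<in> c'"
  shows "\<alpha> i ` {1..l i} \<inter> \<alpha> i' ` {1..l i'} = {}" "\<beta> i ` {1..l i} \<inter> \<beta> i' ` {1..l i'} = {}"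
  using components_dep_edge[OF assms(1,2,4,5)] components_subset[OF assms(1)]
    components_subset[OF assms(2)] assms(3-5) unfolding dep_edges_def by blast+

lemma pairs_components_disjoint:
  assumes "c \<in> components" "c' \<in> components" "c \<noteq> c'"
  shows "fst ` pairs (V \<inter> c) \<inter> fst ` pairs (V \<inter> c') = {}"
    "snd ` pairs (V \<inter> c) \<inter> snd ` pairs (V \<inter> c') = {}"
  using components_share_no_values[OF assms] unfolding fst_pairs snd_pairs by blast+

lemma npairs_decomp:
  assumes V: "V \<subseteq> {1..r}"
  shows "npairs V = (\<Sum>c\<in>components. npairs (V \<inter> c))"
proof -
  have fV: "finite V" by (rule finite_subset[OF V]) simp
  have "npairs V = card (\<Union>c\<in>components. pairs (V \<inter> c))"
    unfolding npairs_def using pairs_decomp[OF V] by simp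
  also have "\<dots> = (\<Sum>c\<in>components. card (pairs (V \<inter> c)))"
  proof (rule card_UN_disjoint[OF finite_components])
    show "\<forall>c\<in>components. finite (pairs (V \<inter> c))" using fV finite_pairs by auto
    show "\<forall>c\<in>components. \<forall>c'\<in>components. c \<noteq> c' \<longrightarrow> pairs (V \<inter> c) \<inter> pairs (V \<inter> c') = {}"
      using pairs_components_disjoint(1) by blast
  qed
  finally show ?thesis unfolding npairs_def .
qed

lemma injective_pairs_decomp:
  assumes V: "V \<subseteq> {1..r}"
  shows "injective_pairs (pairs V) \<longleftrightarrow> (\<forall>c\<in>components. injective_pairs (pairs (V \<inter> c)))"
  unfolding pairs_decomp[OF V] by (rule injective_pairs_UN) (use pairs_components_disjoint in auto)

lemma joint_cumulant_eq_coeff: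
  assumes "r \<ge> 1"
  shows "joint_cumulant (unif_perm N) {1..r} (match_indicator l \<alpha> \<beta>)
       = coeff (cumulant_poly moment {1..r}) 1"
proof -
  have ne: "{1..r} \<noteq> {}" using assms by simp
  show ?thesis
    by (simp only: joint_cumulant_def coeff_cumulant_poly_1[OF finite_atLeastAtMost ne] moment_def)
qed

end

section \<open>Factorisation of the moments over components\<close>

context matching_family
begin

definition component_moment :: "nat set \<Rightarrow> real" where
  "component_moment V = (\<Prod>c\<in>components. moment (V \<inter> c))"

definition correction :: "nat set \<Rightarrow> real" where
  "correction V =
     (\<Prod>c\<in>components. falling_fact (real N) (npairs (V \<inter> c))) / falling_fact (real N) (npairs V)"

definition cluster_log :: "nat set \<Rightarrow> real" where
  "cluster_log T = mobius_diff T (\<lambda>V. ln (correction V))"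

definition cluster_weight :: "nat set \<Rightarrow> real" where
  "cluster_weight T = exp (cluster_log T) - 1"

definition components_met :: "nat set \<Rightarrow> nat set set" where
  "components_met T = {c\<in>components. c \<inter> T \<noteq> {}}"

definition touched :: "nat set \<Rightarrow> nat" where
  "touched T = card (components_met T)"

lemma component_moment_empty: "component_moment {} = 1"
  unfolding component_moment_def using moment_empty by simp

lemma finite_Int_component: "c \<in> components \<Longrightarrow> finite (s \<inter> c)"
  using components_subset by (meson finite_Int finite_atLeastAtMost finite_subset)

lemma component_moment_nonneg: "0 \<le> component_moment s"
  unfolding component_moment_def using moment_nonneg finite_Int_component by (simp add: prod_nonneg)

lemma touched_ge_1:
  assumes "T \<subseteq> {1..r}" "T \<noteq> {}"
  shows "touched T \<ge> 1"
proof -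
  obtain c where "c \<in> components" "c \<inter> T \<noteq> {}" using assms Union_components by blast
  then show ?thesis unfolding touched_def components_met_def
    using finite_components by (auto simp: Suc_le_eq card_gt_0_iff)
qed

lemma not_subset_Union_components:
  assumes "F \<subseteq> components" "card F < touched T"
  shows "\<not> T \<subseteq> \<Union>F"
proof
  assume T: "T \<subseteq> \<Union>F"
  have "components_met T \<subseteq> F"
  proof
    fix c assume c: "c \<in> components_met T"
    then obtain x c' where "x \<in> c" "x \<in> c'" "c' \<in> F" using T unfolding components_met_def by blast
    then show "c \<in> F" using c assms(1) components_disjoint unfolding components_met_def by blast
  qed
  then have "touched T \<le> card F"
    unfolding touched_def using finite_subset[OF assms(1) finite_components] by (rule card_mono[rotated])
  then show False using assms(2) by simp
qed

text \<open>The number of pairs is additive over components, so its \<open>d\<close>-th power is a sum of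
  products of \<open>d\<close> terms, each depending on at most \<open>d\<close> components.\<close>
lemma mobius_diff_npairs_power_eq_0:
  assumes T: "T \<subseteq> {1..r}" and d: "d < touched T"
  shows "mobius_diff T (\<lambda>V. real (npairs V) ^ d) = 0"
proof -
  have "mobius_diff T (\<lambda>V. real (npairs V) ^ d)
      = mobius_diff T (\<lambda>V. \<Sum>f\<in>{..<d} \<rightarrow>\<^sub>E components. \<Prod>i<d. real (npairs (V \<inter> f i)))"
  proof (rule mobius_diff_cong)
    fix V assume "V \<subseteq> T"
    then have "real (npairs V) = (\<Sum>c\<in>components. real (npairs (V \<inter> c)))"
      using npairs_decomp[of V] T by simp
    then have "real (npairs V) ^ d = (\<Prod>i<d. \<Sum>c\<in>components. real (npairs (V \<inter> c)))" by simp
    also have "\<dots> = (\<Sum>f\<in>{..<d} \<rightarrow>\<^sub>E components. \<Prod>i<d. real (npairs (V \<inter> f i)))"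
      by (rule prod_sum_PiE) (use finite_components in auto)
    finally show "real (npairs V) ^ d = (\<Sum>f\<in>{..<d} \<rightarrow>\<^sub>E components. \<Prod>i<d. real (npairs (V \<inter> f i)))" .
  qed
  also have "\<dots> = (\<Sum>f\<in>{..<d} \<rightarrow>\<^sub>E components. mobius_diff T (\<lambda>V. \<Prod>i<d. real (npairs (V \<inter> f i))))"
    by (rule mobius_diff_sum)
  also have "\<dots> = 0"
  proof (intro sum.neutral ballI mobius_diff_eq_0_if_local)
    fix f assume f: "f \<in> {..<d} \<rightarrow>\<^sub>E components"
    show "finite T" using T finite_subset by blast
    show "\<not> T \<subseteq> \<Union>(f ` {..<d})"
      using f d card_image_le[of "{..<d}" f] by (intro not_subset_Union_components) auto
    fix V
    have "V \<inter> \<Union>(f ` {..<d}) \<inter> f i = V \<inter> f i" if "i < d" for i using that by auto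
    then show "(\<Prod>i<d. real (npairs (V \<inter> f i))) = (\<Prod>i<d. real (npairs (V \<inter> \<Union>(f ` {..<d}) \<inter> f i)))"
      by simp
  qed
  finally show ?thesis .
qed

lemma subset_or_disjoint_Union_components:
  assumes C: "C \<subseteq> components" and T: "T \<subseteq> {1..r}"
    and "components_met T \<subseteq> C \<or> components_met T \<inter> C = {}"
  shows "T \<subseteq> \<Union>C \<or> T \<inter> \<Union>C = {}"
  using assms(3)
proof
  assume touched_C: "components_met T \<subseteq> C"
  have "x \<in> \<Union>C" if x: "x \<in> T" for x
  proof -
    obtain c where "c \<in> components" "x \<in> c" using x T Union_components by blast
    then show ?thesis using touched_C x unfolding components_met_def by blast
  qed
  then show ?thesis by blast
next
  assume "components_met T \<inter> C = {}"
  then have "c \<inter> T = {}" if "c \<in> C" for c using that C unfolding components_met_def by blast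
  then show ?thesis by blast
qed

lemma exists_separating_union_of_components:
  assumes F: "F \<subseteq> Pow {1..r} - {{}}" and small: "(\<Sum>T\<in>F. touched T - 1) + 1 < card components"
  obtains J where "J \<subseteq> {1..r}" "J \<noteq> {}" "{1..r} - J \<noteq> {}" "\<forall>c\<in>components. c \<subseteq> J \<or> c \<inter> J = {}"
    "\<forall>T\<in>F. T \<subseteq> J \<or> T \<inter> J = {}"
proof -
  have "components_met T \<subseteq> components \<and> components_met T \<noteq> {}" if T: "T \<in> F" for T
  proof
    show "components_met T \<subseteq> components" unfolding components_met_def by auto
    have "touched T \<ge> 1" using touched_ge_1[of T] T F by auto
    then show "components_met T \<noteq> {}" unfolding touched_def by auto
  qed
  moreover have "finite F" using F finite_subset by blast
  ultimately obtain C where C: "C \<subseteq> components" "C \<noteq> {}" "C \<noteq> components"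
      "\<forall>T\<in>F. components_met T \<subseteq> C \<or> components_met T \<inter> C = {}"
    using exists_separating_subset[of F components components_met] finite_components small
    unfolding touched_def by blast
  have C_cases: "c \<subseteq> \<Union>C \<or> c \<inter> \<Union>C = {}" if "c \<in> components" for c
    using that C(1) components_disjoint by blast
  show ?thesis
  proof
    show "\<Union>C \<subseteq> {1..r}" using C(1) components_subset by blast
    show "\<Union>C \<noteq> {}" using C(1,2) components_nonempty by blast
    obtain c where c: "c \<in> components" "c \<notin> C" using C(1,3) by blast
    then have "c \<inter> \<Union>C = {}" using C(1) components_disjoint by blast
    moreover obtain x where "x \<in> c" using components_nonempty[OF c(1)] by blast
    ultimately show "{1..r} - \<Union>C \<noteq> {}" using components_subset[OF c(1)] by blast
    show "\<forall>c\<in>components. c \<subseteq> \<Union>C \<or> c \<inter> \<Union>C = {}" using C_cases by blast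
    show "\<forall>T\<in>F. T \<subseteq> \<Union>C \<or> T \<inter> \<Union>C = {}"
    proof
      fix T assume T: "T \<in> F"
      then have "T \<subseteq> {1..r}" using F by blast
      then show "T \<subseteq> \<Union>C \<or> T \<inter> \<Union>C = {}"
        by (rule subset_or_disjoint_Union_components[OF C(1)]) (use C(4) T in blast)
    qed
  qed
qed

lemma component_moment_split:
  assumes "\<forall>c\<in>components. c \<subseteq> J \<or> c \<inter> J = {}"
  shows "component_moment s = component_moment (s \<inter> J) * component_moment (s - J)"
proof -
  have "moment (s \<inter> c) = moment (s \<inter> J \<inter> c) * moment ((s - J) \<inter> c)" if "c \<in> components" for c
  proof (cases "c \<subseteq> J")
    case True
    then have "s \<inter> J \<inter> c = s \<inter> c" "(s - J) \<inter> c = {}" by auto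
    then show ?thesis using moment_empty by simp
  next
    case False
    then have "s \<inter> J \<inter> c = {}" "(s - J) \<inter> c = s \<inter> c" using assms that by auto
    then show ?thesis using moment_empty by simp
  qed
  then show ?thesis unfolding component_moment_def by (simp add: prod.distrib)
qed

text \<open>This is where the number of connected components enters: unless the clusters of \<open>F\<close>
  connect all components, the moments split across a union of components.\<close>
lemma coeff_uncut_eq_0:
  assumes F: "F \<subseteq> Pow {1..r} - {{}}" and small: "(\<Sum>T\<in>F. touched T - 1) + 1 < card components"
  shows "coeff (cumulant_poly (uncut component_moment F) {1..r}) 1 = 0"
proof -
  obtain J where J: "J \<subseteq> {1..r}" "J \<noteq> {}" "{1..r} - J \<noteq> {}"
      "\<forall>c\<in>components. c \<subseteq> J \<or> c \<inter> J = {}" "\<forall>T\<in>F. T \<subseteq> J \<or> T \<inter> J = {}"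
    using exists_separating_union_of_components[OF assms] by blast
  have "uncut component_moment F {} = 1" unfolding uncut_def by (simp add: component_moment_empty)
  then show ?thesis
    by (rule coeff_cumulant_poly_1_eq_0_if_split[OF finite_atLeastAtMost J(1-3)])
      (rule uncut_split[OF J(5) component_moment_split[OF J(4)]])
qed

end

text \<open>Beyond this threshold every number \<open>k\<close> of pairs satisfies \<open>2 k \<le> N\<close>, and every cluster
  logarithm is at most \<open>1/2\<close> in absolute value.\<close>
definition large_threshold :: "nat \<Rightarrow> (nat \<Rightarrow> nat) \<Rightarrow> nat" where
  "large_threshold r l = 2 ^ (r + 2) * total_length r l ^ 2 + 2 * total_length r l + 2"

definition cluster_weight_bound :: "nat \<Rightarrow> (nat \<Rightarrow> nat) \<Rightarrow> real" where
  "cluster_weight_bound r l = 2 ^ (r + 2) * real (total_length r l)"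

locale large_matching_family = matching_family +
  assumes large_threshold_le: "large_threshold r l \<le> N"
begin

lemmas large = large_threshold_le[unfolded large_threshold_def]

lemma N_ge_1: "N \<ge> 1"
  using large by simp

lemma two_npairs_le: "V \<subseteq> {1..r} \<Longrightarrow> 2 * npairs V \<le> N"
  using npairs_le_total_length[of V] large by linarith

lemma falling_fact_npairs_pos: "V \<subseteq> {1..r} \<Longrightarrow> falling_fact (real N) (npairs V) > 0"
  using two_npairs_le[of V] by (intro falling_fact_pos) linarith

lemma moment_eq_large:
  "V \<subseteq> {1..r} \<Longrightarrow>
    moment V = (if injective_pairs (pairs V) then 1 / falling_fact (real N) (npairs V) else 0)"
  using moment_eq[of V] two_npairs_le[of V] by linarith

lemma moment_eq_component_moment_mult_correction:
  assumes V: "V \<subseteq> {1..r}"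
  shows "moment V = component_moment V * correction V"
proof (cases "injective_pairs (pairs V)")
  case True
  have Vc: "V \<inter> c \<subseteq> {1..r}" for c using V by auto
  have "moment (V \<inter> c) = 1 / falling_fact (real N) (npairs (V \<inter> c))" if "c \<in> components" for c
    using True injective_pairs_decomp[OF V] that moment_eq_large[OF Vc] by simp
  then have "component_moment V = (\<Prod>c\<in>components. 1 / falling_fact (real N) (npairs (V \<inter> c)))"
    unfolding component_moment_def by simp
  then have "component_moment V * correction V = 1 / falling_fact (real N) (npairs V)"
    unfolding correction_def using falling_fact_npairs_pos[OF Vc] falling_fact_npairs_pos[OF V]
    by (simp add: prod_dividef prod_pos less_imp_neq[symmetric])
  then show ?thesis using moment_eq_large[OF V] True by simp
next
  case False
  then obtain c where "c \<in> components" "\<not> injective_pairs (pairs (V \<inter> c))"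
    using injective_pairs_decomp[OF V] by auto
  moreover have "V \<inter> c \<subseteq> {1..r}" using V by auto
  ultimately have "component_moment V = 0" unfolding component_moment_def
    using finite_components moment_eq_large[of "V \<inter> c"] by (intro prod_zero) auto
  then show ?thesis using moment_eq_large[OF V] False by simp
qed

lemma correction_pos:
  assumes "V \<subseteq> {1..r}"
  shows "correction V > 0"
proof -
  have "V \<inter> c \<subseteq> {1..r}" for c using assms by auto
  then show ?thesis unfolding correction_def
    using falling_fact_npairs_pos assms by (auto intro!: divide_pos_pos prod_pos)
qed

lemma correction_within_component:
  assumes c0: "c0 \<in> components" and V: "V \<subseteq> c0"
  shows "correction V = 1"
proof -
  have "npairs (V \<inter> c) = 0" if "c \<in> components - {c0}" for c
  proof -
    have "V \<inter> c = {}" using components_disjoint[of c c0] that c0 V by blast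
    then show ?thesis using npairs_empty by simp
  qed
  then have "(\<Prod>c\<in>components. falling_fact (real N) (npairs (V \<inter> c)))
      = falling_fact (real N) (npairs (V \<inter> c0))"
    using finite_components c0 by (simp add: prod.remove falling_fact_def)
  moreover have "V \<inter> c0 = V" using V by auto
  moreover have "V \<subseteq> {1..r}" using V components_subset[OF c0] by auto
  ultimately show ?thesis unfolding correction_def using falling_fact_npairs_pos[of V] by simp
qed

text \<open>Moebius inversion of \<open>ln (correction s)\<close> yields the cluster expansion of the moments.\<close>
lemma moment_cluster_expansion:
  assumes s: "s \<subseteq> {1..r}"
  shows "moment s = component_moment s * (\<Prod>T\<in>Pow s - {{}}. 1 + cluster_weight T)"
proof -
  have fin: "finite s" using s finite_subset by blast
  have "correction s = exp (\<Sum>T\<in>Pow s. cluster_log T)"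
    unfolding cluster_log_def sum_mobius_diff[OF fin] using correction_pos[OF s] by simp
  also have "\<dots> = exp (cluster_log {}) * (\<Prod>T\<in>Pow s - {{}}. exp (cluster_log T))"
    using fin by (simp add: exp_sum prod.remove[of "Pow s" "{}"])
  also have "cluster_log {} = 0"
    unfolding cluster_log_def mobius_diff_def correction_def by (simp add: npairs_empty falling_fact_def)
  finally show ?thesis
    using moment_eq_component_moment_mult_correction[OF s] by (simp add: cluster_weight_def)
qed

lemma cluster_log_eq_0_if_touched_le_1:
  assumes T: "T \<subseteq> {1..r}" "T \<noteq> {}" and "touched T \<le> 1"
  shows "cluster_log T = 0"
proof -
  have "touched T = 1" using touched_ge_1[OF T] assms(3) by simp
  then obtain c0 where c0: "components_met T = {c0}"
    unfolding touched_def by (rule card_1_singletonE)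
  then have "c0 \<in> components" unfolding components_met_def by auto
  moreover have "T \<subseteq> c0"
  proof
    fix x assume x: "x \<in> T"
    then obtain c where "c \<in> components" "x \<in> c" using T Union_components by blast
    then have "c \<in> components_met T" using x unfolding components_met_def by auto
    then show "x \<in> c0" using c0 \<open>x \<in> c\<close> by auto
  qed
  ultimately have "cluster_log T = mobius_diff T (\<lambda>V. 0)"
    unfolding cluster_log_def by (intro mobius_diff_cong) (auto simp: correction_within_component)
  then show ?thesis by (simp add: mobius_diff_def)
qed

lemma ln_correction:
  assumes "V \<subseteq> {1..r}"
  shows "ln (correction V)
       = (\<Sum>c\<in>components. ln (falling_fact (real N) (npairs (V \<inter> c))))
         - ln (falling_fact (real N) (npairs V))"
proof -
  have "V \<inter> c \<subseteq> {1..r}" for c using assms by auto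
  then have pos: "falling_fact (real N) (npairs (V \<inter> c)) > 0" for c by (rule falling_fact_npairs_pos)
  then show ?thesis unfolding correction_def
    using falling_fact_npairs_pos[OF assms] finite_components
    by (simp add: ln_div prod_pos ln_prod less_imp_neq[symmetric])
qed

text \<open>Only the Taylor remainder of \<open>ln (1 - j/N)\<close> survives: the component terms each depend on a
  single component, and the first \<open>touched T - 2\<close> Taylor terms are polynomials in \<open>npairs V\<close>
  of degree less than \<open>touched T\<close>.\<close>
lemma cluster_log_eq_remainder:
  assumes T: "T \<subseteq> {1..r}" and t: "touched T \<ge> 2"
  shows "cluster_log T
       = - mobius_diff T (\<lambda>V. \<Sum>j<npairs V. log_remainder (touched T - 2) (real j / real N))"
proof -
  let ?p = "touched T - 2"
  have fin: "finite T" using T finite_subset by blast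
  have "mobius_diff T (\<lambda>V. ln (falling_fact (real N) (npairs (V \<inter> c)))) = 0" if c: "c \<in> components" for c
    using c t not_subset_Union_components[of "{c}" T]
    by (intro mobius_diff_eq_0_if_local[OF fin, of _ c]) (auto simp: Int_assoc)
  then have components:
    "mobius_diff T (\<lambda>V. \<Sum>c\<in>components. ln (falling_fact (real N) (npairs (V \<inter> c)))) = 0"
    by (simp add: mobius_diff_sum)
  have "mobius_diff T (\<lambda>V. power_sum m (npairs V)) = 0" if "m \<le> ?p" for m
    by (rule mobius_diff_power_sum_eq_0[where t="touched T"])
      (use that t mobius_diff_npairs_power_eq_0[OF T] in auto)
  note power_sums = this
  have "mobius_diff T (\<lambda>V. ln (falling_fact (real N) (npairs V)))
      = mobius_diff T (\<lambda>V. ln (real N) * power_sum 0 (npairs V)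
          - (\<Sum>m\<in>{1..?p}. (1 / real N) ^ m / real m * power_sum m (npairs V))
          + (\<Sum>j<npairs V. log_remainder ?p (real j / real N)))"
  proof (rule mobius_diff_cong, rule ln_falling_fact_expansion)
    fix V assume "V \<subseteq> T"
    then have "2 * npairs V \<le> N" using two_npairs_le T by blast
    then show "0 < N" "npairs V \<le> N" using N_ge_1 by auto
  qed
  also have "\<dots> = ln (real N) * mobius_diff T (\<lambda>V. power_sum 0 (npairs V))
      - (\<Sum>m\<in>{1..?p}. (1 / real N) ^ m / real m * mobius_diff T (\<lambda>V. power_sum m (npairs V)))
      + mobius_diff T (\<lambda>V. \<Sum>j<npairs V. log_remainder ?p (real j / real N))"
    by (simp only: mobius_diff_add mobius_diff_diff mobius_diff_cmult mobius_diff_sum)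
  finally have "mobius_diff T (\<lambda>V. ln (falling_fact (real N) (npairs V)))
      = mobius_diff T (\<lambda>V. \<Sum>j<npairs V. log_remainder ?p (real j / real N))"
    using power_sums by simp
  then show ?thesis unfolding cluster_log_def
    using T by (simp add: mobius_diff_cong[OF ln_correction] mobius_diff_diff components)
qed

lemma abs_cluster_log_le:
  assumes T: "T \<subseteq> {1..r}" and t: "touched T \<ge> 2"
  shows "\<bar>cluster_log T\<bar>
       \<le> 2 ^ r * (2 * real (total_length r l)) * (real (total_length r l) / real N) ^ (touched T - 1)"
proof -
  let ?L = "total_length r l"
  have "\<bar>cluster_log T\<bar>
      \<le> (\<Sum>V\<in>Pow T. \<bar>\<Sum>j<npairs V. log_remainder (touched T - 2) (real j / real N)\<bar>)"
    unfolding cluster_log_eq_remainder[OF assms] abs_minus_cancel by (rule abs_mobius_diff_le)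
  also have "\<dots> \<le> (\<Sum>V\<in>Pow T. 2 * real ?L * (real ?L / real N) ^ Suc (touched T - 2))"
    using T N_ge_1 large npairs_le_total_length
    by (intro sum_mono abs_sum_log_remainder_le) auto
  also have "\<dots> = 2 ^ card T * (2 * real ?L * (real ?L / real N) ^ (touched T - 1))"
    using t finite_subset[OF T] by (simp add: card_Pow Suc_diff_Suc numeral_2_eq_2)
  also have "\<dots> \<le> 2 ^ r * (2 * real ?L * (real ?L / real N) ^ (touched T - 1))"
    using card_mono[OF _ T] by (intro mult_right_mono power_increasing) auto
  finally show ?thesis by (simp add: mult.assoc)
qed

lemma abs_cluster_log_le_half:
  assumes T: "T \<subseteq> {1..r}" and t: "touched T \<ge> 2"
  shows "\<bar>cluster_log T\<bar> \<le> 1/2"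
proof -
  let ?L = "real (total_length r l)" and ?q = "real (total_length r l) / real N"
  have q: "0 \<le> ?q" "?q \<le> 1" using large N_ge_1 by (auto simp: field_simps)
  have "\<bar>cluster_log T\<bar> \<le> 2 ^ r * (2 * ?L) * ?q ^ (touched T - 1)"
    by (rule abs_cluster_log_le[OF T t])
  also have "\<dots> \<le> 2 ^ r * (2 * ?L) * ?q"
    using q t power_decreasing[of 1 "touched T - 1" ?q] by (intro mult_left_mono) auto
  also have "\<dots> = 2 ^ (r + 1) * ?L ^ 2 / real N" by (simp add: power2_eq_square)
  also have "\<dots> \<le> 1/2"
  proof -
    have "real (2 ^ (r + 2) * total_length r l ^ 2) \<le> real N" using large by linarith
    then show ?thesis using N_ge_1 by (simp add: field_simps)
  qed
  finally show ?thesis .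
qed

lemma abs_cluster_weight_le:
  assumes T: "T \<subseteq> {1..r}" "T \<noteq> {}"
  shows "\<bar>cluster_weight T\<bar>
       \<le> cluster_weight_bound r l * (real (total_length r l) / real N) ^ (touched T - 1)"
proof (cases "touched T \<le> 1")
  case True
  then show ?thesis
    using cluster_log_eq_0_if_touched_le_1[OF T] by (simp add: cluster_weight_def cluster_weight_bound_def)
next
  case False
  then have t: "touched T \<ge> 2" by simp
  have "\<bar>cluster_weight T\<bar> \<le> 2 * \<bar>cluster_log T\<bar>"
    unfolding cluster_weight_def using abs_cluster_log_le_half[OF T(1) t] by (rule abs_exp_minus_one_le)
  also have "\<dots> \<le> 2 * (2 ^ r * (2 * real (total_length r l))
      * (real (total_length r l) / real N) ^ (touched T - 1))"
    using abs_cluster_log_le[OF T(1) t] by (simp add: mult_ac)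
  also have "\<dots> = cluster_weight_bound r l * (real (total_length r l) / real N) ^ (touched T - 1)"
    unfolding cluster_weight_bound_def by (simp add: power_add)
  finally show ?thesis .
qed

end

section \<open>Bounding the cumulant\<close>

definition partition_weight :: "nat \<Rightarrow> real" where
  "partition_weight r = (\<Sum>P\<in>{P. partition_on {1..r} P}. fact (card P - 1))"

definition cumulant_bound :: "nat \<Rightarrow> (nat \<Rightarrow> nat) \<Rightarrow> real" where
  "cumulant_bound r l = (cluster_weight_bound r l + 1) ^ (2 ^ r) * (real (total_length r l) + 1) ^ r
     * partition_weight r * 2 ^ total_length r l"

context large_matching_family
begin

lemma moment_le_power:
  assumes W: "W \<subseteq> {1..r}"
  shows "moment W \<le> (2 / real N) ^ npairs W"
proof -
  have "1 / falling_fact (real N) (npairs W) \<le> 1 / (real N / 2) ^ npairs W"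
    using falling_fact_ge[OF two_npairs_le[OF W]] falling_fact_npairs_pos[OF W] N_ge_1
    by (intro divide_left_mono) auto
  then show ?thesis using moment_eq_large[OF W] by (auto simp: power_divide)
qed

lemma component_moment_le_power:
  assumes s: "s \<subseteq> {1..r}"
  shows "component_moment s \<le> (2 / real N) ^ npairs s"
proof -
  have "component_moment s \<le> (\<Prod>c\<in>components. (2 / real N) ^ npairs (s \<inter> c))"
  proof (unfold component_moment_def, intro prod_mono conjI)
    fix c assume "c \<in> components"
    then show "0 \<le> moment (s \<inter> c)" using moment_nonneg finite_Int_component by blast
    show "moment (s \<inter> c) \<le> (2 / real N) ^ npairs (s \<inter> c)" using s by (intro moment_le_power) auto
  qed
  also have "\<dots> = (2 / real N) ^ npairs s" by (simp add: power_sum npairs_decomp[OF s])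
  finally show ?thesis .
qed

lemma abs_prod_uncut_le:
  assumes P: "partition_on {1..r} P"
  shows "\<bar>\<Prod>s\<in>P. uncut component_moment F s\<bar> \<le> (2 / real N) ^ npairs {1..r}"
proof -
  have sub: "s \<subseteq> {1..r}" if "s \<in> P" for s using P that partition_onD1 by blast
  have "\<bar>\<Prod>s\<in>P. uncut component_moment F s\<bar> \<le> (\<Prod>s\<in>P. (2 / real N) ^ npairs s)"
    unfolding abs_prod uncut_def using sub component_moment_nonneg component_moment_le_power
    by (intro prod_mono) auto
  also have "\<dots> = (2 / real N) ^ (\<Sum>s\<in>P. npairs s)" by (simp add: power_sum)
  also have "\<dots> \<le> (2 / real N) ^ npairs {1..r}"
  proof (rule power_decreasing)
    have "npairs {1..r} = card (\<Union>s\<in>P. pairs s)"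
      unfolding npairs_def pairs_def using partition_onD1[OF P] by auto
    also have "\<dots> \<le> (\<Sum>s\<in>P. npairs s)"
      unfolding npairs_def using finite_elements[OF _ P] by (intro card_UN_le) simp
    finally show "npairs {1..r} \<le> (\<Sum>s\<in>P. npairs s)" .
  qed (use N_ge_1 large in auto)
  finally show ?thesis .
qed

lemma joint_cumulant_cluster_expansion:
  assumes "r \<ge> 1"
  shows "joint_cumulant (unif_perm N) {1..r} (match_indicator l \<alpha> \<beta>) =
    (\<Sum>F\<in>Pow (Pow {1..r} - {{}}). (\<Prod>T\<in>F. cluster_weight T)
       * coeff (cumulant_poly (uncut component_moment F) {1..r}) 1)"
  unfolding joint_cumulant_eq_coeff[OF assms]
  by (rule coeff_cumulant_poly_cluster_expansion[OF _ component_moment_empty moment_empty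
        moment_cluster_expansion]) auto

lemma abs_prod_cluster_weight_le:
  assumes F: "F \<subseteq> Pow {1..r} - {{}}" and connected: "card components - 1 \<le> (\<Sum>T\<in>F. touched T - 1)"
  shows "\<bar>\<Prod>T\<in>F. cluster_weight T\<bar>
       \<le> (cluster_weight_bound r l + 1) ^ (2 ^ r) * (real (total_length r l) + 1) ^ r
          * (1 / real N) ^ (card components - 1)"
proof -
  let ?K = "cluster_weight_bound r l" and ?L = "real (total_length r l)"
  let ?q = "?L / real N" and ?b = "card components - 1"
  have K: "0 \<le> ?K" unfolding cluster_weight_bound_def by simp
  have q: "0 \<le> ?q" "?q \<le> 1" using large N_ge_1 by (auto simp: field_simps)
  have "card F \<le> 2 ^ r" using card_mono[OF _ F] card_Pow[of "{1..r}"] by fastforce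
  have "\<bar>\<Prod>T\<in>F. cluster_weight T\<bar> \<le> (\<Prod>T\<in>F. ?K * ?q ^ (touched T - 1))"
    unfolding abs_prod using F abs_cluster_weight_le by (intro prod_mono) auto
  also have "\<dots> = ?K ^ card F * ?q ^ (\<Sum>T\<in>F. touched T - 1)"
    by (simp add: prod.distrib power_sum)
  also have "\<dots> \<le> (?K + 1) ^ (2 ^ r) * ?q ^ ?b"
  proof (intro mult_mono)
    have "?K ^ card F \<le> (?K + 1) ^ card F" using K by (intro power_mono) auto
    also have "\<dots> \<le> (?K + 1) ^ (2 ^ r)" using K \<open>card F \<le> 2 ^ r\<close> by (intro power_increasing) auto
    finally show "?K ^ card F \<le> (?K + 1) ^ (2 ^ r)" .
  qed (use q connected K in \<open>auto intro: power_decreasing\<close>)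
  also have "?q ^ ?b \<le> (?L + 1) ^ r * (1 / real N) ^ ?b"
  proof -
    have "?L ^ ?b \<le> (?L + 1) ^ r"
      using card_components_le by (intro order.trans[OF power_mono power_increasing]) auto
    then show ?thesis by (simp add: power_divide divide_right_mono power_one_over)
  qed
  finally show ?thesis using K by (simp add: mult_left_mono mult.assoc)
qed

lemma abs_coeff_uncut_le:
  assumes "r \<ge> 1"
  shows "\<bar>coeff (cumulant_poly (uncut component_moment F) {1..r}) 1\<bar>
       \<le> partition_weight r * 2 ^ total_length r l * (1 / real N) ^ npairs {1..r}"
proof -
  have "\<bar>coeff (cumulant_poly (uncut component_moment F) {1..r}) 1\<bar>
      \<le> partition_weight r * (2 / real N) ^ npairs {1..r}"
    unfolding partition_weight_def using assms abs_prod_uncut_le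
    by (intro abs_coeff_cumulant_poly_1_le) auto
  also have "\<dots> \<le> partition_weight r * (2 ^ total_length r l * (1 / real N) ^ npairs {1..r})"
    using npairs_le_total_length[of "{1..r}"]
    by (intro mult_left_mono) (auto simp: power_divide power_one_over partition_weight_def
        intro!: divide_right_mono power_increasing sum_nonneg)
  finally show ?thesis by (simp add: mult.assoc)
qed

lemma abs_cluster_term_le:
  assumes "r \<ge> 1" and F: "F \<subseteq> Pow {1..r} - {{}}"
  shows "\<bar>(\<Prod>T\<in>F. cluster_weight T) * coeff (cumulant_poly (uncut component_moment F) {1..r}) 1\<bar>
       \<le> cumulant_bound r l * (1 / real N) ^ (card components - 1 + npairs {1..r})"
proof (cases "(\<Sum>T\<in>F. touched T - 1) + 1 < card components")
  case True
  then show ?thesis using coeff_uncut_eq_0[OF F]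
    by (simp add: cumulant_bound_def cluster_weight_bound_def partition_weight_def sum_nonneg)
next
  case False
  let ?A = "(cluster_weight_bound r l + 1) ^ (2 ^ r) * (real (total_length r l) + 1) ^ r
      * (1 / real N) ^ (card components - 1)"
  let ?B = "partition_weight r * 2 ^ total_length r l * (1 / real N) ^ npairs {1..r}"
  have "\<bar>\<Prod>T\<in>F. cluster_weight T\<bar> \<le> ?A"
    using abs_prod_cluster_weight_le[OF F] False by simp
  moreover have "\<bar>coeff (cumulant_poly (uncut component_moment F) {1..r}) 1\<bar> \<le> ?B"
    by (rule abs_coeff_uncut_le[OF assms(1)])
  ultimately have "\<bar>\<Prod>T\<in>F. cluster_weight T\<bar> * \<bar>coeff (cumulant_poly (uncut component_moment F) {1..r}) 1\<bar>
      \<le> ?A * ?B"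
    by (rule mult_mono) (auto simp: cluster_weight_bound_def)
  then show ?thesis unfolding abs_mult cumulant_bound_def power_add by (simp add: mult_ac)
qed

lemma abs_joint_cumulant_le_large:
  assumes "r \<ge> 1"
  shows "\<bar>joint_cumulant (unif_perm N) {1..r} (match_indicator l \<alpha> \<beta>)\<bar>
       \<le> 2 ^ (2 ^ r) * cumulant_bound r l * (1 / real N) ^ (card components - 1 + npairs {1..r})"
proof -
  let ?E = "Pow (Pow {1..r} - {{}})" and ?e = "card components - 1 + npairs {1..r}"
  have "\<bar>joint_cumulant (unif_perm N) {1..r} (match_indicator l \<alpha> \<beta>)\<bar>
      \<le> (\<Sum>F\<in>?E. cumulant_bound r l * (1 / real N) ^ ?e)"
    unfolding joint_cumulant_cluster_expansion[OF assms]
    by (intro order.trans[OF sum_abs] sum_mono abs_cluster_term_le[OF assms]) auto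
  also have "\<dots> \<le> 2 ^ (2 ^ r) * (cumulant_bound r l * (1 / real N) ^ ?e)"
  proof -
    have "card ?E \<le> 2 ^ (2 ^ r)"
      using card_mono[of "Pow {1..r}" "Pow {1..r} - {{}}"] by (simp add: card_Pow)
    moreover have "0 \<le> cumulant_bound r l"
      unfolding cumulant_bound_def partition_weight_def cluster_weight_bound_def
      by (simp add: sum_nonneg)
    ultimately show ?thesis by (simp add: mult_right_mono)
  qed
  finally show ?thesis by (simp add: mult.assoc)
qed

end

definition cumulant_constant :: "nat \<Rightarrow> (nat \<Rightarrow> nat) \<Rightarrow> real" where
  "cumulant_constant r l = max (2 ^ (2 ^ r) * cumulant_bound r l)
     (partition_weight r * real (large_threshold r l) ^ (r + total_length r l))"

context matching_family
begin

lemma abs_joint_cumulant_le_partition_weight: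
  assumes "r \<ge> 1"
  shows "\<bar>joint_cumulant (unif_perm N) {1..r} (match_indicator l \<alpha> \<beta>)\<bar> \<le> partition_weight r"
proof -
  have "\<bar>\<Prod>s\<in>P. moment s\<bar> \<le> 1" if "partition_on {1..r} P" for P
  proof -
    have "finite s" if "s \<in> P" for s
    proof (rule finite_subset)
      show "s \<subseteq> {1..r}" using partition_onD1[OF \<open>partition_on {1..r} P\<close>] that by blast
    qed simp
    then show ?thesis
      using moment_nonneg moment_le_1 by (auto simp: abs_prod intro!: prod_le_1)
  qed
  then show ?thesis unfolding joint_cumulant_eq_coeff[OF assms] partition_weight_def
    using abs_coeff_cumulant_poly_1_le[of "{1..r}" moment 1] assms by simp
qed

text \<open>For \<open>N\<close> below the threshold of the cluster expansion, the trivial bound is absorbed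
  into the constant.\<close>
lemma abs_joint_cumulant_le:
  assumes r: "r \<ge> 1" and N: "0 < N"
  shows "\<bar>joint_cumulant (unif_perm N) {1..r} (match_indicator l \<alpha> \<beta>)\<bar>
       \<le> cumulant_constant r l * (1 / real N) ^ (card components - 1 + npairs {1..r})"
proof (cases "large_threshold r l \<le> N")
  case True
  then interpret large_matching_family r l \<alpha> \<beta> N by unfold_locales
  show ?thesis using abs_joint_cumulant_le_large[OF r]
    by (rule order.trans) (simp add: cumulant_constant_def mult_right_mono)
next
  case False
  let ?M = "real (large_threshold r l)" and ?n = "r + total_length r l"
  let ?e = "card components - 1 + npairs {1..r}"
  have M: "real N < ?M" using False by simp
  have "?e \<le> ?n" using card_components_le npairs_le_total_length[of "{1..r}"] by simp
  then have small: "(1 / ?M) ^ ?n \<le> (1 / real N) ^ ?e"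
    using M N by (intro order.trans[OF power_mono power_decreasing]) (auto simp: field_simps)
  have "\<bar>joint_cumulant (unif_perm N) {1..r} (match_indicator l \<alpha> \<beta>)\<bar> \<le> partition_weight r"
    by (rule abs_joint_cumulant_le_partition_weight[OF r])
  also have "\<dots> = partition_weight r * ?M ^ ?n * (1 / ?M) ^ ?n" using M by (simp add: power_one_over)
  also have "\<dots> \<le> partition_weight r * ?M ^ ?n * (1 / real N) ^ ?e"
    using small by (intro mult_left_mono) (auto simp: partition_weight_def sum_nonneg)
  also have "\<dots> \<le> cumulant_constant r l * (1 / real N) ^ ?e"
    by (intro mult_right_mono) (simp_all add: cumulant_constant_def)
  finally show ?thesis .
qed

end

lemma powr_minus_of_nat: "0 < N \<Longrightarrow> real N powr (- real n) = (1 / real N) ^ n"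
  by (simp add: powr_minus powr_realpow power_one_over inverse_eq_divide)

theorem lemma6p1:
  fixes r :: nat and l :: "nat \<Rightarrow> nat"
  assumes "r \<ge> 1" and "\<And>i. i \<in> {1..r} \<Longrightarrow> l i \<ge> 1"
  shows "\<exists>C::real. \<forall>(N::nat) (\<alpha>::nat \<Rightarrow> nat \<Rightarrow> nat) (\<beta>::nat \<Rightarrow> nat \<Rightarrow> nat).
           (\<forall>i\<in>{1..r}. \<forall>j\<in>{1..l i}. \<alpha> i j \<in> {1..N} \<and> \<beta> i j \<in> {1..N}) \<longrightarrow>
           \<bar>joint_cumulant (unif_perm N) {1..r} (match_indicator l \<alpha> \<beta>)\<bar>
             \<le> C * real N powr (- (real (num_components r l \<alpha> \<beta>) - 1) - real (mu_e r l \<alpha> \<beta>))"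
proof (intro exI[of _ "cumulant_constant r l"] allI impI)
  fix N :: nat and \<alpha> \<beta> :: "nat \<Rightarrow> nat \<Rightarrow> nat"
  assume range: "\<forall>i\<in>{1..r}. \<forall>j\<in>{1..l i}. \<alpha> i j \<in> {1..N} \<and> \<beta> i j \<in> {1..N}"
  interpret matching_family r l \<alpha> \<beta> N using range by unfold_locales
  have "\<alpha> 1 1 \<in> {1..N}" using range assms by auto
  then have N: "0 < N" by simp
  have "num_components r l \<alpha> \<beta> = card components" "mu_e r l \<alpha> \<beta> = npairs {1..r}"
    unfolding num_components_def components_def linked_def mu_e_def npairs_def pairs_def by simp_all
  with card_components_ge_1[OF assms(1)]
  have exponent: "- (real (num_components r l \<alpha> \<beta>) - 1) - real (mu_e r l \<alpha> \<beta>)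
      = - real (card components - 1 + npairs {1..r})" by (simp add: of_nat_diff)
  show "\<bar>joint_cumulant (unif_perm N) {1..r} (match_indicator l \<alpha> \<beta>)\<bar>
      \<le> cumulant_constant r l
         * real N powr (- (real (num_components r l \<alpha> \<beta>) - 1) - real (mu_e r l \<alpha> \<beta>))"
    unfolding exponent powr_minus_of_nat[OF N] by (rule abs_joint_cumulant_le[OF assms(1) N])
qed

end
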